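(* Let $d\in\mathbb{Z}$ be square-free and let $E_d$ be the elliptic curve $dy^2=(x+13)(x+4)(x-12)$ over $\mathbb{Q}$. Then $E_d(\mathbb{Q})_{\mathrm{tors}}\cong\mathbb{Z}/4\mathbb{Z}\times\mathbb{Z}/2\mathbb{Z}$ if $d\in\{1,-1\}$, and $E_d(\mathbb{Q})_{\mathrm{tors}}\cong\mathbb{Z}/2\mathbb{Z}\times\mathbb{Z}/2\mathbb{Z}$ otherwise. The points of order $4$ are $(-8,\pm20)$ and $(32,\pm180)$ when $d=1$, and $(2,\pm30)$ and $(-28,\pm120)$ when $d=-1$.
   Context: $E_1$ is a model of the modular curve $X_0(15)$ and $E_d$ is its quadratic twist by $d$. *)

theory Defs
  imports Complex_Main "HOL-Algebra.Elementary_Groups" "HOL-Computational_Algebra.Squarefree"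
begin

text \<open>The curve E_d : d y^2 = (x+13)(x+4)(x-12) over the rationals.
  Points are represented as (rat \<times> rat) option, None being the point at infinity O.\<close>

definition ec_rhs :: "rat \<Rightarrow> rat" where
  "ec_rhs x = (x + 13) * (x + 4) * (x - 12)"

definition on_curve :: "int \<Rightarrow> (rat \<times> rat) option \<Rightarrow> bool" where
  "on_curve d P = (case P of None \<Rightarrow> True
                   | Some (x, y) \<Rightarrow> of_int d * y^2 = ec_rhs x)"

text \<open>Chord-tangent addition on d y^2 = x^3 + 5x^2 - 152x - 624 with O = None.\<close>
fun ec_add :: "int \<Rightarrow> (rat \<times> rat) option \<Rightarrow> (rat \<times> rat) option \<Rightarrow> (rat \<times> rat) option" where
  "ec_add d None Q = Q"
| "ec_add d (Some P) None = Some P"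
| "ec_add d (Some (x1, y1)) (Some (x2, y2)) =
     (if x1 = x2 \<and> y1 = - y2 then None
      else let l = (if x1 = x2 then (3 * x1^2 + 10 * x1 - 152) / (2 * of_int d * y1)
                    else (y2 - y1) / (x2 - x1));
               x3 = of_int d * l^2 - 5 - x1 - x2;
               y3 = l * (x1 - x3) - y1
           in Some (x3, y3))"

fun ec_mul :: "int \<Rightarrow> nat \<Rightarrow> (rat \<times> rat) option \<Rightarrow> (rat \<times> rat) option" where
  "ec_mul d 0 P = None"
| "ec_mul d (Suc n) P = ec_add d P (ec_mul d n P)"

definition ec_tors :: "int \<Rightarrow> ((rat \<times> rat) option) monoid" where
  "ec_tors d = \<lparr> carrier = {P. on_curve d P \<and> (\<exists>n>0. ec_mul d n P = None)},
                 monoid.mult = ec_add d, one = None \<rparr>"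

definition has_order :: "int \<Rightarrow> (rat \<times> rat) option \<Rightarrow> nat \<Rightarrow> bool" where
  "has_order d P n = (n > 0 \<and> ec_mul d n P = None \<and>
                      (\<forall>m. 0 < m \<and> m < n \<longrightarrow> ec_mul d m P \<noteq> None))"

end

theory Submission
  imports Defs
begin

(* Every torsion point P of E_d is killed by 4.  If P had odd prime order l, then d x(P) and
   d x(2P) would be integers: in the formal parameter t = X/Y of the integral model
   Y^2 = X^3 + 5d X^2 - 152d^2 X - 624d^3 (X = d x, Y = d^2 y), the points whose X has a pole
   of order >= 2n at p form a group on which t is additive modulo p^(3n), so l t(P) = t(lP) = 0
   contradicts v_p(t(P)) = k when X(P) has a pole of order 2k.  Since P = 2H, every d (x - e)
   for a root e of the cubic is a square, and the resulting integers b1, b2, b3 with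
   b1^2 - b2^2 = 9d, b2^2 - b3^2 = 16d and 2 b1 b2 b3 | b2^2 b3^2 + b1^2 b3^2 + b1^2 b2^2
   have bounded absolute values for squarefree d; a finite search excludes them.
   A point P with 2P = (e, 0) satisfies (x - e)^2 = f'(e), which leaves x in {2, -28, 32, -8}
   and forces d = +-1; halving such a point once more would make 5, 15, 45 or -15 a rational
   square.  So the torsion group is the 2-torsion plus, for d = +-1, four points of order 4,
   and the isomorphisms are checked on the explicit group tables. *)

section \<open>The group law\<close>

definition ec_rhs_deriv :: "rat \<Rightarrow> rat" where
  "ec_rhs_deriv x = 3 * x^2 + 10 * x - 152"

lemma ec_rhs_expand: "ec_rhs x = x^3 + 5 * x^2 - 152 * x - 624"
  by (simp add: ec_rhs_def algebra_simps power2_eq_square power3_eq_cube)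

lemma ec_rhs_eq_0_iff: "ec_rhs x = 0 \<longleftrightarrow> x = -13 \<or> x = -4 \<or> x = 12"
  by (auto simp: ec_rhs_def)

lemma ec_rhs_deriv_nonzero_at_root: "ec_rhs x = 0 \<Longrightarrow> ec_rhs_deriv x \<noteq> 0"
  by (auto simp: ec_rhs_eq_0_iff ec_rhs_deriv_def)

text \<open>The line \<open>y = s x + m\<close> meets \<open>d y^2 = ec_rhs x\<close> at \<open>x1, x2, x3\<close> (with multiplicity),
  expressed by Vieta's formulas.\<close>

definition chord_roots :: "int \<Rightarrow> rat \<Rightarrow> rat \<Rightarrow> rat \<Rightarrow> rat \<Rightarrow> rat \<Rightarrow> bool" where
  "chord_roots d s m x1 x2 x3 \<longleftrightarrow>
     of_int d * s^2 - 5 = x1 + x2 + x3 \<and>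
     2 * of_int d * s * m + 152 = -(x1*x2 + x1*x3 + x2*x3) \<and>
     of_int d * m^2 + 624 = x1*x2*x3"

lemma chord_roots_factor:
  assumes "chord_roots d s m x1 x2 x3"
  shows "of_int d * (s*x+m)^2 - ec_rhs x = -((x-x1)*(x-x2)*(x-x3))"
proof -
  have e1: "of_int d * s^2 = 5 + x1 + x2 + x3"
    and e2: "2 * of_int d * s * m = -152 - (x1*x2 + x1*x3 + x2*x3)"
    and e3: "of_int d * m^2 = x1*x2*x3 - 624"
    using assms by (auto simp: chord_roots_def)
  have "of_int d * (s*x+m)^2 = (of_int d * s^2) * x^2 + (2 * of_int d * s * m) * x + of_int d * m^2"
    by (simp add: algebra_simps power2_eq_square)
  also have "\<dots> = (5 + x1 + x2 + x3) * x^2 + (-152 - (x1*x2 + x1*x3 + x2*x3)) * x + (x1*x2*x3 - 624)"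
    by (simp only: e1 e2 e3)
  finally show ?thesis
    by (simp add: ec_rhs_expand algebra_simps power2_eq_square power3_eq_cube)
qed

lemma chord_roots_on_curve:
  "chord_roots d s m x1 x2 x3 \<Longrightarrow> of_int d * (s*x3+m)^2 = ec_rhs x3"
  using chord_roots_factor[of d s m x1 x2 x3 x3] by simp

lemma chord_roots_tangent:
  assumes "chord_roots d s m x1 x1 x3"
  shows "ec_rhs_deriv x1 = 2 * of_int d * s * (s*x1+m)"
proof -
  have e1: "of_int d * s^2 = 5 + x1 + x1 + x3"
    and e2: "2 * of_int d * s * m = -152 - (x1*x1 + x1*x3 + x1*x3)"
    using assms by (auto simp: chord_roots_def)
  have "2 * of_int d * s * (s*x1+m) = 2*x1*(of_int d * s^2) + 2 * of_int d * s * m"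
    by (simp add: algebra_simps power2_eq_square)
  also have "\<dots> = 2*x1*(5 + x1 + x1 + x3) + (-152 - (x1*x1 + x1*x3 + x1*x3))"
    by (simp only: e1 e2)
  finally show ?thesis by (simp add: ec_rhs_deriv_def algebra_simps power2_eq_square)
qed

lemma chord_roots_perm:
  assumes "chord_roots d s m x1 x2 x3"
  shows "chord_roots d s m x2 x1 x3" "chord_roots d s m x3 x2 x1"
  using assms by (auto simp: chord_roots_def algebra_simps)

lemma chord_roots_neg: "chord_roots d s m x1 x2 x3 \<Longrightarrow> chord_roots d (-s) (-m) x1 x2 x3"
  by (simp add: chord_roots_def)

lemma ec_add_chord:
  assumes d: "d \<noteq> 0"
    and c1: "of_int d * y1^2 = ec_rhs x1"
    and l1: "y1 = s*x1+m" and l2: "y2 = s*x2+m" and L: "chord_roots d s m x1 x2 x3"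
  shows "ec_add d (Some (x1,y1)) (Some (x2,y2)) = Some (x3, -(s*x3+m))"
proof (cases "x1 = x2")
  case False
  have "(y2-y1)/(x2-x1) = s" using False l1 l2 by (simp add: field_simps)
  moreover have "of_int d * s^2 - 5 - x1 - x2 = x3" using L by (simp add: chord_roots_def)
  ultimately show ?thesis using False by (simp add: Let_def algebra_simps l1)
next
  case True
  have L': "chord_roots d s m x1 x1 x3" using L True by simp
  have deriv: "ec_rhs_deriv x1 = 2 * of_int d * s * y1" using chord_roots_tangent[OF L'] l1 by simp
  have y1: "y1 \<noteq> 0"
  proof
    assume "y1 = 0"
    then have "ec_rhs x1 = 0" "ec_rhs_deriv x1 = 0" using c1 deriv by auto
    then show False using ec_rhs_deriv_nonzero_at_root by blast
  qed
  have "(3 * x1^2 + 10 * x1 - 152) / (2 * of_int d * y1) = s"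
    using deriv y1 d by (simp add: ec_rhs_deriv_def field_simps)
  moreover have "of_int d * s^2 - 5 - x1 - x1 = x3" using L' by (simp add: chord_roots_def)
  moreover have "y2 = y1" using True l1 l2 by simp
  ultimately show ?thesis using True y1 by (simp add: Let_def algebra_simps l1)
qed

lemma chord_roots_remainder:
  assumes x3: "x3 = of_int d * s^2 - 5 - x1 - x2"
    and K1: "K1 = 2 * of_int d * s * m + 152 + (x1*x2 + x1*x3 + x2*x3)"
    and K0: "K0 = of_int d * m^2 + 624 - x1*x2*x3"
  shows "of_int d * (s*x+m)^2 - ec_rhs x + (x-x1)*(x-x2)*(x-x3) = K1*x + K0"
    and "chord_roots d s m x1 x2 x3 \<longleftrightarrow> K1 = 0 \<and> K0 = 0"
  unfolding K1 K0 x3 chord_roots_def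
  by (simp_all add: ec_rhs_expand algebra_simps power2_eq_square power3_eq_cube)

lemma chord_roots_exists_secant:
  assumes c1: "of_int d * y1^2 = ec_rhs x1" and c2: "of_int d * y2^2 = ec_rhs x2"
    and ne: "x1 \<noteq> x2"
  obtains s m x3 where "y1 = s*x1+m" "y2 = s*x2+m" "chord_roots d s m x1 x2 x3"
proof -
  define s where "s = (y2-y1)/(x2-x1)"
  define m where "m = y1 - s*x1"
  define x3 where "x3 = of_int d * s^2 - 5 - x1 - x2"
  define K1 where "K1 = 2 * of_int d * s * m + 152 + (x1*x2 + x1*x3 + x2*x3)"
  define K0 where "K0 = of_int d * m^2 + 624 - x1*x2*x3"
  note R = chord_roots_remainder[OF x3_def K1_def K0_def]
  have l1: "y1 = s*x1+m" by (simp add: m_def)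
  have "s*(x2-x1) = y2 - y1" using ne by (simp add: s_def)
  then have l2: "y2 = s*x2+m" by (simp add: m_def algebra_simps)
  have a1: "K1*x1 + K0 = 0" using R(1)[of x1] c1 l1 by simp
  have a2: "K1*x2 + K0 = 0" using R(1)[of x2] c2 l2 by simp
  have "K1 * (x1 - x2) = (K1*x1 + K0) - (K1*x2 + K0)" by (simp add: algebra_simps)
  then have "K1 = 0" using a1 a2 ne by simp
  then have "chord_roots d s m x1 x2 x3" using R(2) a1 by simp
  then show ?thesis using l1 l2 that by blast
qed

lemma chord_roots_exists_tangent:
  assumes d: "d \<noteq> 0" and c1: "of_int d * y1^2 = ec_rhs x1" and y1: "y1 \<noteq> 0"
  obtains s m x3 where "y1 = s*x1+m" "chord_roots d s m x1 x1 x3"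
proof -
  define s where "s = ec_rhs_deriv x1 / (2 * of_int d * y1)"
  define m where "m = y1 - s*x1"
  define x3 where "x3 = of_int d * s^2 - 5 - x1 - x1"
  define K1 where "K1 = 2 * of_int d * s * m + 152 + (x1*x1 + x1*x3 + x1*x3)"
  define K0 where "K0 = of_int d * m^2 + 624 - x1*x1*x3"
  note R = chord_roots_remainder[OF x3_def K1_def K0_def]
  have l1: "y1 = s*x1+m" by (simp add: m_def)
  have "2 * of_int d * s * y1 = ec_rhs_deriv x1" using d y1 by (simp add: s_def)
  moreover have "K1 = 2 * of_int d * s * y1 - ec_rhs_deriv x1"
    by (simp add: K1_def m_def x3_def ec_rhs_deriv_def algebra_simps power2_eq_square)
  ultimately have "K1 = 0" by simp
  moreover have "K0 = 0" using R(1)[of x1] c1 l1 \<open>K1 = 0\<close> by simp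
  ultimately show ?thesis using R(2) l1 that by blast
qed

lemma chord_roots_exists:
  assumes d: "d \<noteq> 0"
    and c1: "of_int d * y1^2 = ec_rhs x1" and c2: "of_int d * y2^2 = ec_rhs x2"
    and ni: "\<not> (x1 = x2 \<and> y1 = - y2)"
  obtains s m x3 where "y1 = s*x1+m" "y2 = s*x2+m" "chord_roots d s m x1 x2 x3"
proof (cases "x1 = x2")
  case False
  then show ?thesis using chord_roots_exists_secant[OF c1 c2] that by blast
next
  case True
  have "of_int d * y2^2 = of_int d * y1^2" using c1 c2 True by simp
  then have "y2 = y1 \<or> y2 = -y1" using d by (simp add: power2_eq_iff)
  then have "y2 = y1" and "y1 \<noteq> 0" using ni True by auto
  then show ?thesis using chord_roots_exists_tangent[OF d c1] True that by metis
qed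

lemma on_curve_None [simp]: "on_curve d None"
  by (simp add: on_curve_def)

fun ec_neg :: "(rat \<times> rat) option \<Rightarrow> (rat \<times> rat) option" where
  "ec_neg None = None"
| "ec_neg (Some (x,y)) = Some (x, -y)"

lemma ec_neg_neg [simp]: "ec_neg (ec_neg P) = P"
  by (cases P) auto

lemma ec_add_None_right [simp]: "ec_add d P None = P"
  by (cases P) auto

lemma ec_add_neg: "ec_add d P (ec_neg P) = None"
  by (cases P) auto

lemma ec_add_eq_None: "ec_add d P Q = None \<Longrightarrow> Q = ec_neg P"
  by (cases P; cases Q) (auto simp: Let_def split: if_splits)

lemma on_curve_ec_neg: "on_curve d P \<Longrightarrow> on_curve d (ec_neg P)"
  by (cases P) (auto simp: on_curve_def)

lemma on_curve_pair_cases: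
  assumes "on_curve d P" "on_curve d Q"
  obtains "P = None" | "Q = None"
  | x1 y1 x2 y2 where "P = Some (x1,y1)" "Q = Some (x2,y2)"
      "of_int d * y1^2 = ec_rhs x1" "of_int d * y2^2 = ec_rhs x2"
  using assms by (cases P; cases Q) (auto simp: on_curve_def)

lemma ec_add_SomeE:
  assumes d: "d \<noteq> 0" and c1: "of_int d * y1^2 = ec_rhs x1" and c2: "of_int d * y2^2 = ec_rhs x2"
  obtains "x1 = x2" "y1 = -y2" "ec_add d (Some (x1,y1)) (Some (x2,y2)) = None"
  | s m x3 where "y1 = s*x1+m" "y2 = s*x2+m" "chord_roots d s m x1 x2 x3"
      "ec_add d (Some (x1,y1)) (Some (x2,y2)) = Some (x3, -(s*x3+m))"
proof (cases "x1 = x2 \<and> y1 = -y2")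
  case False
  then obtain s m x3 where "y1 = s*x1+m" "y2 = s*x2+m" "chord_roots d s m x1 x2 x3"
    using chord_roots_exists[OF d c1 c2] by blast
  then show ?thesis using ec_add_chord[OF d c1] that(2) by blast
qed (use that(1) in auto)

lemma on_curve_ec_add:
  assumes d: "d \<noteq> 0" and P: "on_curve d P" and Q: "on_curve d Q"
  shows "on_curve d (ec_add d P Q)"
proof (cases rule: on_curve_pair_cases[OF P Q])
  case (3 x1 y1 x2 y2)
  show ?thesis
  proof (cases rule: ec_add_SomeE[OF d 3(3,4)])
    case (2 s m x3)
    have "of_int d * (-(s*x3+m))^2 = ec_rhs x3"
      using chord_roots_on_curve[OF 2(3)] by (simp only: power2_minus)
    then show ?thesis using 3 2 by (simp add: on_curve_def)
  qed (use 3 in \<open>simp add: on_curve_def\<close>)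
qed (use P Q in auto)

lemma ec_add_commute:
  assumes d: "d \<noteq> 0" and P: "on_curve d P" and Q: "on_curve d Q"
  shows "ec_add d P Q = ec_add d Q P"
proof (cases rule: on_curve_pair_cases[OF P Q])
  case (3 x1 y1 x2 y2)
  show ?thesis
  proof (cases rule: ec_add_SomeE[OF d 3(3,4)])
    case (2 s m x3)
    then show ?thesis
      using 3 ec_add_chord[OF d 3(4) 2(2,1) chord_roots_perm(1)[OF 2(3)]] by simp
  qed (use 3 in auto)
qed auto

lemma ec_neg_ec_add:
  assumes d: "d \<noteq> 0" and P: "on_curve d P" and Q: "on_curve d Q"
  shows "ec_neg (ec_add d P Q) = ec_add d (ec_neg P) (ec_neg Q)"
proof (cases rule: on_curve_pair_cases[OF P Q])
  case (3 x1 y1 x2 y2)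
  show ?thesis
  proof (cases rule: ec_add_SomeE[OF d 3(3,4)])
    case (2 s m x3)
    have c1: "of_int d * (-y1)^2 = ec_rhs x1" using 3 by simp
    have "ec_add d (Some (x1,-y1)) (Some (x2,-y2)) = Some (x3, -((-s)*x3+(-m)))"
      by (rule ec_add_chord[OF d c1 _ _ chord_roots_neg[OF 2(3)]]) (use 2 in auto)
    then show ?thesis using 3 2 by simp
  qed (use 3 in auto)
qed auto

lemma ec_add_neg_cancel_right:
  assumes d: "d \<noteq> 0" and P: "on_curve d P" and Q: "on_curve d Q"
  shows "ec_add d (ec_add d P Q) (ec_neg Q) = P"
proof (cases rule: on_curve_pair_cases[OF P Q])
  case (3 x1 y1 x2 y2)
  show ?thesis
  proof (cases rule: ec_add_SomeE[OF d 3(3,4)])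
    case (2 s m x3)
    have c3: "of_int d * (-(s*x3+m))^2 = ec_rhs x3"
      using chord_roots_on_curve[OF 2(3)] by (simp only: power2_minus)
    have "ec_add d (Some (x3,-(s*x3+m))) (Some (x2,-y2)) = Some (x1, -((-s)*x1+(-m)))"
      by (rule ec_add_chord[OF d c3 _ _ chord_roots_neg[OF chord_roots_perm(2)[OF 2(3)]]])
        (use 2 in auto)
    then show ?thesis using 3 2 by simp
  qed (use 3 in auto)
qed (auto simp: ec_add_neg)

lemma ec_add_neg_cancel_left:
  assumes d: "d \<noteq> 0" and P: "on_curve d P" and Q: "on_curve d Q"
  shows "ec_add d P (ec_add d (ec_neg P) Q) = Q"
proof -
  have nP: "on_curve d (ec_neg P)" using on_curve_ec_neg[OF P] .
  have "ec_add d P (ec_add d (ec_neg P) Q) = ec_add d (ec_add d Q (ec_neg P)) (ec_neg (ec_neg P))"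
    using ec_add_commute[OF d nP Q] ec_add_commute[OF d P on_curve_ec_add[OF d Q nP]] by simp
  also have "\<dots> = Q" using ec_add_neg_cancel_right[OF d Q nP] .
  finally show ?thesis .
qed

lemma ec_add_eq_neg_rotate:
  assumes d: "d \<noteq> 0" and P: "on_curve d P" and Q: "on_curve d Q" and R: "on_curve d R"
    and e: "ec_add d Q R = ec_neg P"
  shows "R = ec_neg (ec_add d P Q)"
proof -
  have "R = ec_add d (ec_neg Q) (ec_add d Q R)"
    using ec_add_neg_cancel_left[OF d on_curve_ec_neg[OF Q] R] by simp
  also have "\<dots> = ec_neg (ec_add d Q P)" using e ec_neg_ec_add[OF d Q P] by simp
  also have "\<dots> = ec_neg (ec_add d P Q)" using ec_add_commute[OF d P Q] by simp
  finally show ?thesis .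
qed

lemma chord_third_point:
  assumes d: "d \<noteq> 0" and L: "chord_roots d s m x1 x2 x3"
    and c1: "of_int d * y1^2 = ec_rhs x1" and l1: "y1 = s*x1+m" and l2: "y2 = s*x2+m"
    and c: "of_int d * y^2 = ec_rhs x" and x1: "x \<noteq> x1" and x2: "x \<noteq> x2" and l: "y = s*x+m"
  shows "Some (x, y) = ec_neg (ec_add d (Some (x1,y1)) (Some (x2,y2)))"
proof -
  have "(x-x1)*(x-x2)*(x-x3) = 0" using chord_roots_factor[OF L, of x] c l by simp
  then have "x = x3" using x1 x2 by simp
  then show ?thesis using ec_add_chord[OF d c1 l1 l2 L] l by simp
qed

text \<open>Associativity via a parabola: through points \<open>A, B, C\<close> in general position passes a
  parabola \<open>y = c x^2 + c1 x + c0\<close> (tangent to the curve where two of them coincide) meeting the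
  curve in a fourth point \<open>T\<close>. Subtracting the chord through \<open>A\<close> and \<open>B\<close> leaves a multiple of
  \<open>(x - xa) (x - xb)\<close>, so the chord through \<open>-(A + B)\<close> and \<open>C\<close> also passes through \<open>T\<close>; hence
  \<open>(A + B) + C = -T\<close>, and by symmetry \<open>(B + C) + A = -T\<close>.\<close>

definition parabola_roots :: "int \<Rightarrow> rat \<Rightarrow> rat \<Rightarrow> rat \<Rightarrow> rat \<Rightarrow> rat \<Rightarrow> rat \<Rightarrow> rat \<Rightarrow> bool" where
  "parabola_roots d c c1 c0 xa xb xc xt \<longleftrightarrow>
     2*of_int d*c*c1 - 1 = - (of_int d*c^2) * (xa+xb+xc+xt) \<and>
     of_int d*(c1^2 + 2*c*c0) - 5 = (of_int d*c^2) * (xa*xb + xa*xc + xa*xt + xb*xc + xb*xt + xc*xt) \<and>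
     2*of_int d*c1*c0 + 152 = - (of_int d*c^2) * (xa*xb*xc + xa*xb*xt + xa*xc*xt + xb*xc*xt) \<and>
     of_int d*c0^2 + 624 = (of_int d*c^2) * (xa*xb*xc*xt)"

lemma parabola_roots_rotate:
  "parabola_roots d c c1 c0 xa xb xc xt \<Longrightarrow> parabola_roots d c c1 c0 xb xc xa xt"
  unfolding parabola_roots_def by (simp add: algebra_simps)

lemma parabola_roots_swap:
  "parabola_roots d c c1 c0 xa xb xc xt \<Longrightarrow> parabola_roots d c c1 c0 xb xa xc xt"
  unfolding parabola_roots_def by (simp add: algebra_simps)

text \<open>Relative to a chord through the first two roots, the parabola
  \<open>y = c (x - x1) (x - x2) + s x + m\<close> is described by the sum \<open>x3 + xt\<close> and the product \<open>x3 * xt\<close>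
  of its two remaining roots.\<close>

lemma parabola_roots_of_chord:
  assumes L: "chord_roots d s m x1 x2 xu"
    and R1: "of_int d*c^2*(x3 + xt) = 1 - 2*of_int d*c*s + of_int d*c^2*(x1+x2)"
    and R2: "of_int d*c^2*(x3*xt) = xu + 2*of_int d*c*m + of_int d*c^2*(x1*x2)"
  shows "parabola_roots d c (s - c*(x1+x2)) (m + c*x1*x2) x1 x2 x3 xt"
proof -
  let ?D = "of_int d :: rat"
  have L1: "?D*s^2 = 5 + x1 + x2 + xu" and L2: "2*?D*s*m = -152 - (x1*x2 + x1*xu + x2*xu)"
    and L3: "?D*m^2 = x1*x2*xu - 624" using L by (auto simp: chord_roots_def)
  have "- (?D*c^2) * (x1+x2+x3+xt) = - (?D*c^2*(x3 + xt)) - ?D*c^2*(x1+x2)"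
    by (simp add: algebra_simps)
  also have "\<dots> = 2*?D*c*(s - c*(x1+x2)) - 1"
    unfolding R1 by (simp add: algebra_simps power2_eq_square)
  finally have Q1: "2*?D*c*(s - c*(x1+x2)) - 1 = - (?D*c^2) * (x1+x2+x3+xt)" by simp
  have "(?D*c^2) * (x1*x2 + x1*x3 + x1*xt + x2*x3 + x2*xt + x3*xt) =
      ?D*c^2*(x1*x2) + (x1+x2)*(?D*c^2*(x3 + xt)) + ?D*c^2*(x3*xt)"
    by (simp add: algebra_simps)
  also have "\<dots> = ?D*((s - c*(x1+x2))^2 + 2*c*(m + c*x1*x2)) - 5 + (5 + x1 + x2 + xu - ?D*s^2)"
    unfolding R1 R2 by (simp add: algebra_simps power2_eq_square)
  finally have Q2: "?D*((s - c*(x1+x2))^2 + 2*c*(m + c*x1*x2)) - 5 =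
      (?D*c^2) * (x1*x2 + x1*x3 + x1*xt + x2*x3 + x2*xt + x3*xt)" using L1 by simp
  have "- (?D*c^2) * (x1*x2*x3 + x1*x2*xt + x1*x3*xt + x2*x3*xt) =
       - (x1*x2)*(?D*c^2*(x3 + xt)) - (x1+x2)*(?D*c^2*(x3*xt))"
    by (simp add: algebra_simps)
  also have "\<dots> = 2*?D*(s - c*(x1+x2))*(m + c*x1*x2) + 152
      - (2*?D*s*m + 152 + (x1*x2 + x1*xu + x2*xu))"
    unfolding R1 R2 by (simp add: algebra_simps power2_eq_square)
  finally have Q3: "2*?D*(s - c*(x1+x2))*(m + c*x1*x2) + 152 =
      - (?D*c^2) * (x1*x2*x3 + x1*x2*xt + x1*x3*xt + x2*x3*xt)" using L2 by simp
  have "(?D*c^2) * (x1*x2*x3*xt) = (x1*x2)*(?D*c^2*(x3*xt))" by (simp add: algebra_simps)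
  also have "\<dots> = ?D*(m + c*x1*x2)^2 + 624 + (x1*x2*xu - 624 - ?D*m^2)"
    unfolding R2 by (simp add: algebra_simps power2_eq_square)
  finally have Q4: "?D*(m + c*x1*x2)^2 + 624 = (?D*c^2) * (x1*x2*x3*xt)" using L3 by simp
  show ?thesis using Q1 Q2 Q3 Q4 unfolding parabola_roots_def by simp
qed

lemma chord_of_parabola_roots:
  assumes L: "chord_roots d s m x1 x2 xu"
    and P: "parabola_roots d c (s - c*(x1+x2)) (m + c*x1*x2) x1 x2 x3 xt"
  shows "of_int d*c^2*(x3 + xt) = 1 - 2*of_int d*c*s + of_int d*c^2*(x1+x2)"
    and "of_int d*c^2*(x3*xt) = xu + 2*of_int d*c*m + of_int d*c^2*(x1*x2)"
proof -
  let ?D = "of_int d :: rat"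
  have L1: "?D*s^2 - 5 = x1 + x2 + xu" using L by (simp add: chord_roots_def)
  have Q1: "2*?D*c*(s - c*(x1+x2)) - 1 = - (?D*c^2) * (x1+x2+x3+xt)"
    and Q2: "?D*((s - c*(x1+x2))^2 + 2*c*(m + c*x1*x2)) - 5
      = (?D*c^2) * (x1*x2 + x1*x3 + x1*xt + x2*x3 + x2*xt + x3*xt)"
    using P unfolding parabola_roots_def by simp_all
  show R1: "?D*c^2*(x3 + xt) = 1 - 2*?D*c*s + ?D*c^2*(x1+x2)"
    using Q1 by (simp add: algebra_simps power2_eq_square)
  have "?D*c^2*(x3*xt) = ?D*((s - c*(x1+x2))^2 + 2*c*(m + c*x1*x2)) - 5
      - (?D*c^2)*(x1*x2) - (x1+x2)*(?D*c^2*(x3 + xt))"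
    using Q2 by (simp add: algebra_simps)
  also have "\<dots> = (?D*s^2 - 5) + 2*?D*c*m + ?D*c^2*(x1*x2) - (x1+x2)"
    unfolding R1 by (simp add: algebra_simps power2_eq_square)
  finally show "?D*c^2*(x3*xt) = xu + 2*?D*c*m + ?D*c^2*(x1*x2)" using L1 by simp
qed

lemma parabola_second_chord_intercept:
  assumes d: "d \<noteq> 0" and c: "c \<noteq> 0" and L: "chord_roots d s m x1 x2 xu"
    and P: "parabola_roots d c (s - c*(x1+x2)) (m + c*x1*x2) x1 x2 x3 xt"
  shows "-(s*xu+m) = (s + c*(x3 + xt - (x1+x2)))*xu + (m + c*(x1*x2 - x3*xt))"
proof -
  let ?D = "of_int d :: rat"
  have R1: "?D*c^2*(x3 + xt) = 1 - 2*?D*c*s + ?D*c^2*(x1+x2)"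
    and R2: "?D*c^2*(x3*xt) = xu + 2*?D*c*m + ?D*c^2*(x1*x2)"
    using chord_of_parabola_roots[OF L P] by simp_all
  have "?D*c*((s + c*(x3 + xt - (x1+x2)))*xu + (m + c*(x1*x2 - x3*xt)) + (s*xu+m))
      = 2*?D*c*s*xu - ?D*c^2*(x1+x2)*xu + (?D*c^2*(x3 + xt))*xu + 2*?D*c*m + ?D*c^2*(x1*x2)
        - ?D*c^2*(x3*xt)"
    by (simp add: algebra_simps power2_eq_square)
  also have "\<dots> = 0" unfolding R1 R2 by (simp add: algebra_simps)
  finally show ?thesis using d c by (simp add: add_eq_0_iff)
qed

lemma parabola_second_chord:
  assumes c: "c \<noteq> 0" and L: "chord_roots d s m x1 x2 xu"
    and P: "parabola_roots d c (s - c*(x1+x2)) (m + c*x1*x2) x1 x2 x3 xt"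
  defines "s' \<equiv> s + c*(x3 + xt - (x1+x2))" and "m' \<equiv> m + c*(x1*x2 - x3*xt)"
  shows "chord_roots d s' m' xu x3 xt"
proof -
  let ?D = "of_int d :: rat"
  define S where "S = x3 + xt"
  define Pr where "Pr = x3 * xt"
  have L1: "?D*s^2 - 5 = x1 + x2 + xu" and L2: "2*?D*s*m + 152 = -(x1*x2 + x1*xu + x2*xu)"
    and L3: "?D*m^2 + 624 = x1*x2*xu" using L by (auto simp: chord_roots_def)
  have R1: "?D*c^2*S = 1 - 2*?D*c*s + ?D*c^2*(x1+x2)"
    and R2: "?D*c^2*Pr = xu + 2*?D*c*m + ?D*c^2*(x1*x2)"
    using chord_of_parabola_roots[OF L P] unfolding S_def Pr_def by simp_all
  have M1: "?D*s'^2 - 5 = xu + x3 + xt"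
  proof -
    have w: "?D*c*(c*(S - (x1+x2))) = 1 - 2*?D*c*s" using R1 by (simp add: algebra_simps power2_eq_square)
    have "c*(?D*s'^2 - 5 - xu - x3 - xt) = c*(?D*(s + c*(S - (x1+x2)))^2 - 5 - xu - S)"
      unfolding s'_def S_def by (simp add: algebra_simps)
    also have "\<dots> = c*((?D*s^2 - 5) - (x1+x2) - xu)
        + (c*(S - (x1+x2)))*(2*?D*c*s + ?D*c*(c*(S - (x1+x2))) - 1)"
      by (simp add: algebra_simps power2_eq_square)
    also have "\<dots> = 0" unfolding w L1 by simp
    finally show ?thesis using c by simp
  qed
  have xu: "xu = ?D*c^2*(x1*x2 + Pr) - 2*?D*c*(m + c*x1*x2)"
    using R2 by (simp add: algebra_simps power2_eq_square)
  have M2: "2*?D*s'*m' + 152 = -(xu*x3 + xu*xt + x3*xt)"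
  proof -
    have "2*?D*s'*m' + 152 = (2*?D*s*m + 152) + 2*?D*s*c*(x1*x2 - Pr)
        + 2*?D*c*m*(S - (x1+x2)) + 2*?D*c^2*(S - (x1+x2))*(x1*x2 - Pr)"
      unfolding s'_def m'_def S_def Pr_def by (simp add: algebra_simps power2_eq_square)
    also have "\<dots> = -(xu*S + Pr) + (Pr - x1*x2)*((1 - 2*?D*c*s + ?D*c^2*(x1+x2)) - ?D*c^2*S)"
      unfolding L2 xu by (simp add: algebra_simps power2_eq_square)
    also have "\<dots> = -(xu*S + Pr)" using R1 by simp
    finally show ?thesis unfolding S_def Pr_def by (simp add: algebra_simps)
  qed
  have M3: "?D*m'^2 + 624 = xu*x3*xt"
  proof -
    have "?D*m'^2 + 624 = (?D*m^2 + 624) + 2*?D*m*c*(x1*x2 - Pr) + ?D*c^2*(x1*x2 - Pr)^2"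
      unfolding m'_def Pr_def by (simp add: algebra_simps power2_eq_square)
    also have "\<dots> = Pr * xu"
      unfolding L3 xu by (simp add: algebra_simps power2_eq_square)
    finally show ?thesis unfolding Pr_def by (simp add: algebra_simps)
  qed
  show ?thesis using M1 M2 M3 by (simp add: chord_roots_def)
qed

lemma parabola_roots_of_chord_root:
  assumes d: "d \<noteq> 0" and c: "c \<noteq> 0" and L: "chord_roots d s m x1 x2 xu"
    and h: "of_int d*c^2*(x3-x1)*(x3-x2) + 2*of_int d*c*(s*x3+m) - (x3 - xu) = 0"
    and xt: "xt = (1 - 2*of_int d*c*s + of_int d*c^2*(x1+x2))/(of_int d*c^2) - x3"
  shows "parabola_roots d c (s - c*(x1+x2)) (m + c*x1*x2) x1 x2 x3 xt"
proof (rule parabola_roots_of_chord[OF L])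
  let ?D = "of_int d :: rat"
  show R1: "?D*c^2*(x3 + xt) = 1 - 2*?D*c*s + ?D*c^2*(x1+x2)"
    using d c unfolding xt by (simp add: field_simps)
  have "?D*c^2*(x3*xt) = x3*(?D*c^2*(x3 + xt)) - ?D*c^2*x3^2"
    by (simp add: algebra_simps power2_eq_square)
  also have "\<dots> = xu + 2*?D*c*m + ?D*c^2*(x1*x2)
      - (?D*c^2*(x3-x1)*(x3-x2) + 2*?D*c*(s*x3+m) - (x3 - xu))"
    unfolding R1 by (simp add: algebra_simps power2_eq_square)
  finally show "?D*c^2*(x3*xt) = xu + 2*?D*c*m + ?D*c^2*(x1*x2)" using h by simp
qed

text \<open>\<open>xt\<close> is the fourth intersection of the parabola with the curve. Where two of the points
  coincide the parabola must be tangent to the curve: \<open>2 d y y' = ec_rhs' x\<close> with \<open>y' = 2 c x + c1\<close>.\<close>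

definition parabola_through ::
  "int \<Rightarrow> rat \<times> rat \<Rightarrow> rat \<times> rat \<Rightarrow> rat \<times> rat \<Rightarrow> rat \<Rightarrow> rat \<Rightarrow> rat \<Rightarrow> rat \<Rightarrow> bool" where
  "parabola_through d A B C c c1 c0 xt \<longleftrightarrow> c \<noteq> 0 \<and>
     snd A = c*(fst A)^2 + c1*(fst A) + c0 \<and> snd B = c*(fst B)^2 + c1*(fst B) + c0 \<and>
     snd C = c*(fst C)^2 + c1*(fst C) + c0 \<and> parabola_roots d c c1 c0 (fst A) (fst B) (fst C) xt \<and>
     (fst A = fst B \<longrightarrow> 2 * of_int d * snd A * (2*c*fst A + c1) = ec_rhs_deriv (fst A)) \<and>
     (fst B = fst C \<longrightarrow> 2 * of_int d * snd B * (2*c*fst B + c1) = ec_rhs_deriv (fst B)) \<and>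
     (fst A = fst C \<longrightarrow> 2 * of_int d * snd A * (2*c*fst A + c1) = ec_rhs_deriv (fst A))"

lemma parabola_through_rotate:
  "parabola_through d A B C c c1 c0 xt \<Longrightarrow> parabola_through d B C A c c1 c0 xt"
  unfolding parabola_through_def using parabola_roots_rotate by auto

lemma parabola_through_swap:
  "parabola_through d A B C c c1 c0 xt \<Longrightarrow> parabola_through d B A C c c1 c0 xt"
  unfolding parabola_through_def using parabola_roots_swap by auto

lemma parabola_chord_coeffs:
  assumes d: "d \<noteq> 0" and L: "chord_roots d s m xa xb xu"
    and la: "ya = s*xa+m" and lb: "yb = s*xb+m"
    and qa: "ya = c*xa^2 + c1*xa + c0" and qb: "yb = c*xb^2 + c1*xb + c0"
    and tan: "xa = xb \<Longrightarrow> ya \<noteq> 0 \<and> 2 * of_int d * ya * (2*c*xa + c1) = ec_rhs_deriv xa"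
  shows "c1 = s - c*(xa+xb)" and "c0 = m + c*xa*xb"
proof -
  show c1: "c1 = s - c*(xa+xb)"
  proof (cases "xa = xb")
    case False
    have "(c*(xa+xb) + c1 - s) * (xa - xb)
        = (c*xa^2 + c1*xa + c0 - (s*xa+m)) - (c*xb^2 + c1*xb + c0 - (s*xb+m))"
      by (simp add: algebra_simps power2_eq_square)
    also have "\<dots> = 0" using qa qb la lb by simp
    finally show ?thesis using False by simp
  next
    case True
    have "ec_rhs_deriv xa = 2 * of_int d * s * ya"
      using chord_roots_tangent[of d s m xa xu] L True la by simp
    then have "(2 * of_int d * ya) * (2*c*xa + c1) = (2 * of_int d * ya) * s"
      using tan[OF True] by (simp add: algebra_simps)
    then show ?thesis using tan[OF True] d True by simp
  qed
  have "c0 = ya - c*xa^2 - c1*xa" using qa by simp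
  also have "\<dots> = m + c*xa*xb" unfolding c1 la by (simp add: algebra_simps power2_eq_square)
  finally show "c0 = m + c*xa*xb" .
qed

lemma ec_add_ec_add_parabola:
  assumes d: "d \<noteq> 0" and ca: "of_int d * ya^2 = ec_rhs xa" and cb: "of_int d * yb^2 = ec_rhs xb"
    and H: "parabola_through d (xa,ya) (xb,yb) (xc,yc) c c1 c0 xt"
  shows "ec_add d (ec_add d (Some (xa,ya)) (Some (xb,yb))) (Some (xc,yc))
           = Some (xt, -(c*xt^2 + c1*xt + c0))"
proof -
  have c: "c \<noteq> 0" and qa: "ya = c*xa^2 + c1*xa + c0" and qb: "yb = c*xb^2 + c1*xb + c0"
    and qc: "yc = c*xc^2 + c1*xc + c0" and P: "parabola_roots d c c1 c0 xa xb xc xt"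
    and tan: "xa = xb \<Longrightarrow> 2 * of_int d * ya * (2*c*xa + c1) = ec_rhs_deriv xa"
    using H by (auto simp: parabola_through_def)
  have ya: "ya \<noteq> 0" if "xa = xb"
  proof
    assume "ya = 0"
    then have "ec_rhs xa = 0" "ec_rhs_deriv xa = 0" using ca tan[OF that] by auto
    then show False using ec_rhs_deriv_nonzero_at_root by blast
  qed
  have "\<not> (xa = xb \<and> ya = -yb)" using ya qa qb by force
  then obtain s m xu where la: "ya = s*xa+m" and lb: "yb = s*xb+m" and L: "chord_roots d s m xa xb xu"
    using chord_roots_exists[OF d ca cb] by blast
  have c1: "c1 = s - c*(xa+xb)" and c0: "c0 = m + c*xa*xb"
    using parabola_chord_coeffs[OF d L la lb qa qb] ya tan by blast+
  define s' where "s' = s + c*(xc + xt - (xa+xb))"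
  define m' where "m' = m + c*(xa*xb - xc*xt)"
  have P': "parabola_roots d c (s - c*(xa+xb)) (m + c*xa*xb) xa xb xc xt" using P c1 c0 by simp
  have L': "chord_roots d s' m' xu xc xt"
    using parabola_second_chord[OF c L P'] unfolding s'_def m'_def .
  have u: "-(s*xu+m) = s'*xu + m'"
    using parabola_second_chord_intercept[OF d c L P'] unfolding s'_def m'_def .
  have cu: "of_int d * (-(s*xu+m))^2 = ec_rhs xu"
    using chord_roots_on_curve[OF L] by (simp only: power2_minus)
  have "yc = s'*xc + m'" and "s'*xt + m' = c*xt^2 + c1*xt + c0"
    unfolding qc c1 c0 s'_def m'_def by (simp_all add: algebra_simps power2_eq_square)
  then show ?thesis
    using ec_add_chord[OF d ca la lb L] ec_add_chord[OF d cu u _ L'] by simp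
qed

lemma parabola_through_exists:
  assumes d: "d \<noteq> 0" and c3: "of_int d * y3^2 = ec_rhs x3"
    and l1: "y1 = s*x1+m" and l2: "y2 = s*x2+m" and L: "chord_roots d s m x1 x2 xu"
    and n1: "x3 \<noteq> x1" and n2: "x3 \<noteq> x2" and off: "y3 \<noteq> s*x3+m"
  shows "\<exists>c c1 c0 xt. parabola_through d (x1,y1) (x2,y2) (x3,y3) c c1 c0 xt"
proof -
  let ?D = "of_int d :: rat"
  define c where "c = (y3 - (s*x3+m))/((x3-x1)*(x3-x2))"
  have Pi: "(x3-x1)*(x3-x2) \<noteq> 0" using n1 n2 by simp
  have y3: "y3 = (s*x3+m) + c*((x3-x1)*(x3-x2))" using Pi unfolding c_def by simp
  have c0: "c \<noteq> 0" using off y3 by auto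
  define xt where "xt = (1 - 2*?D*c*s + ?D*c^2*(x1+x2))/(?D*c^2) - x3"
  have "(x3-x1)*(x3-x2) * (?D*c^2*(x3-x1)*(x3-x2) + 2*?D*c*(s*x3+m) - (x3 - xu))
      = (?D*(s*x3+m)^2 - ec_rhs x3) + 2*?D*c*(s*x3+m)*((x3-x1)*(x3-x2))
        + ?D*c^2*((x3-x1)*(x3-x2))^2"
    using chord_roots_factor[OF L, of x3] by (simp add: algebra_simps power2_eq_square)
  also have "\<dots> = ?D*y3^2 - ec_rhs x3" unfolding y3 by (simp add: algebra_simps power2_eq_square)
  also have "\<dots> = 0" using c3 by simp
  finally have h: "?D*c^2*(x3-x1)*(x3-x2) + 2*?D*c*(s*x3+m) - (x3 - xu) = 0" using Pi by simp
  have "ec_rhs_deriv x1 = 2 * ?D * s * y1" if "x1 = x2"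
    using chord_roots_tangent[of d s m x1 xu] L that l1 by simp
  then have "parabola_through d (x1,y1) (x2,y2) (x3,y3) c (s - c*(x1+x2)) (m + c*x1*x2) xt"
    using c0 n1 n2 l1 l2 y3 parabola_roots_of_chord_root[OF d c0 L h xt_def]
    unfolding parabola_through_def by (auto simp: algebra_simps power2_eq_square)
  then show ?thesis by blast
qed

lemma parabola_through_exists_triple:
  assumes d: "d \<noteq> 0" and y1: "y1 \<noteq> 0"
    and l1: "y1 = s*x1+m" and L: "chord_roots d s m x1 x1 xu" and xu: "xu \<noteq> x1"
  shows "\<exists>c c1 c0 xt. parabola_through d (x1,y1) (x1,y1) (x1,y1) c c1 c0 xt"
proof -
  let ?D = "of_int d :: rat"
  define c where "c = (x1 - xu)/(2*?D*y1)"
  have c0: "c \<noteq> 0" using xu y1 d unfolding c_def by simp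
  have "2*?D*c*y1 = x1 - xu" using y1 d unfolding c_def by simp
  then have h: "?D*c^2*(x1-x1)*(x1-x1) + 2*?D*c*(s*x1+m) - (x1 - xu) = 0" using l1 by simp
  define xt where "xt = (1 - 2*?D*c*s + ?D*c^2*(x1+x1))/(?D*c^2) - x1"
  have "ec_rhs_deriv x1 = 2 * ?D * s * y1" using chord_roots_tangent[OF L] l1 by simp
  then have "parabola_through d (x1,y1) (x1,y1) (x1,y1) c (s - c*(x1+x1)) (m + c*x1*x1) xt"
    using c0 l1 parabola_roots_of_chord_root[OF d c0 L h xt_def]
    unfolding parabola_through_def by (auto simp: algebra_simps power2_eq_square)
  then show ?thesis by blast
qed

lemma parabola_through_off_chord:
  assumes d: "d \<noteq> 0"
    and ca: "of_int d * ya^2 = ec_rhs xa" and cb: "of_int d * yb^2 = ec_rhs xb"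
    and cc: "of_int d * yc^2 = ec_rhs xc"
    and nab: "\<not> (xa = xb \<and> ya = -yb)" and n: "xc \<noteq> xa" "xc \<noteq> xb"
    and off: "Some (xc, yc) \<noteq> ec_neg (ec_add d (Some (xa,ya)) (Some (xb,yb)))"
  shows "\<exists>c c1 c0 xt. parabola_through d (xa,ya) (xb,yb) (xc,yc) c c1 c0 xt"
proof -
  obtain s m xu where l: "ya = s*xa+m" "yb = s*xb+m" and L: "chord_roots d s m xa xb xu"
    using chord_roots_exists[OF d ca cb nab] .
  have "yc \<noteq> s*xc+m" using chord_third_point[OF d L ca l cc n] off by auto
  then show ?thesis using parabola_through_exists[OF d cc l L n] by blast
qed

lemma parabola_through_general_position:
  assumes d: "d \<noteq> 0"
    and ca: "of_int d * ya^2 = ec_rhs xa" and cb: "of_int d * yb^2 = ec_rhs xb"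
    and cc: "of_int d * yc^2 = ec_rhs xc"
    and P: "P = Some (xa,ya)" and Q: "Q = Some (xb,yb)" and R: "R = Some (xc,yc)"
    and g: "Q \<noteq> ec_neg P" "R \<noteq> ec_neg Q" "R \<noteq> ec_neg P" "R \<noteq> ec_neg (ec_add d P Q)"
  shows "\<exists>c c1 c0 xt. parabola_through d (xa,ya) (xb,yb) (xc,yc) c c1 c0 xt"
proof -
  have on: "on_curve d P" "on_curve d Q" "on_curve d R"
    using ca cb cc P Q R by (simp_all add: on_curve_def)
  have ni: "\<not> (xa = xb \<and> ya = -yb)" "\<not> (xb = xc \<and> yb = -yc)" "\<not> (xa = xc \<and> ya = -yc)"
    using g(1-3) P Q R by auto
  consider "xc \<noteq> xa" "xc \<noteq> xb" | "xa \<noteq> xb" "xa \<noteq> xc" | "xb \<noteq> xa" "xb \<noteq> xc"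
    | "xb = xa" "xc = xa" by blast
  then show ?thesis
  proof cases
    case 1
    then show ?thesis using parabola_through_off_chord[OF d ca cb cc ni(1)] g(4) P Q R by simp
  next
    case 2
    have "P \<noteq> ec_neg (ec_add d Q R)" using ec_add_eq_neg_rotate[OF d on] g(4) by auto
    then obtain c c1 c0 xt where "parabola_through d (xb,yb) (xc,yc) (xa,ya) c c1 c0 xt"
      using parabola_through_off_chord[OF d cb cc ca ni(2)] 2 P Q R by auto
    then show ?thesis using parabola_through_rotate by metis
  next
    case 3
    have "Q \<noteq> ec_neg (ec_add d P R)"
      using ec_add_eq_neg_rotate[OF d on(2,1,3)] ec_add_commute[OF d on(1,2)] g(4) by auto
    then obtain c c1 c0 xt where "parabola_through d (xa,ya) (xc,yc) (xb,yb) c c1 c0 xt"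
      using parabola_through_off_chord[OF d ca cc cb ni(3)] 3 P Q R by auto
    then show ?thesis using parabola_through_swap parabola_through_rotate by metis
  next
    case 4
    have "of_int d * yb^2 = of_int d * ya^2" "of_int d * yc^2 = of_int d * ya^2"
      using ca cb cc 4 by simp_all
    then have "yb = ya \<or> yb = -ya" "yc = ya \<or> yc = -ya" using d by (simp_all add: power2_eq_iff)
    then have yb: "yb = ya" and yc: "yc = ya" and ya: "ya \<noteq> 0" using ni(1,3) 4 by auto
    obtain s m xu where l: "ya = s*xa+m" and L: "chord_roots d s m xa xa xu"
      using chord_roots_exists_tangent[OF d ca ya] .
    have "xu \<noteq> xa" using ec_add_chord[OF d ca l l L] g(4) P Q R 4 yb yc l by auto
    then show ?thesis using parabola_through_exists_triple[OF d ya l L] 4 yb yc by simp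
  qed
qed

lemma ec_add_assoc_general_position:
  assumes d: "d \<noteq> 0" and P: "on_curve d P" and Q: "on_curve d Q" and R: "on_curve d R"
    and PQR: "P = Some (xa,ya)" "Q = Some (xb,yb)" "R = Some (xc,yc)"
    and g: "Q \<noteq> ec_neg P" "R \<noteq> ec_neg Q" "R \<noteq> ec_neg P" "R \<noteq> ec_neg (ec_add d P Q)"
  shows "ec_add d (ec_add d P Q) R = ec_add d P (ec_add d Q R)"
proof -
  have ca: "of_int d * ya^2 = ec_rhs xa" and cb: "of_int d * yb^2 = ec_rhs xb"
    and cc: "of_int d * yc^2 = ec_rhs xc" using P Q R PQR by (auto simp: on_curve_def)
  obtain c c1 c0 xt where H: "parabola_through d (xa,ya) (xb,yb) (xc,yc) c c1 c0 xt"
    using parabola_through_general_position[OF d ca cb cc PQR g] by blast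
  have "ec_add d (ec_add d Q R) P = ec_add d (ec_add d P Q) R"
    using ec_add_ec_add_parabola[OF d ca cb H]
      ec_add_ec_add_parabola[OF d cb cc parabola_through_rotate[OF H]] PQR by simp
  then show ?thesis using ec_add_commute[OF d P on_curve_ec_add[OF d Q R]] by simp
qed

theorem ec_add_assoc:
  assumes d: "d \<noteq> 0" and P: "on_curve d P" and Q: "on_curve d Q" and R: "on_curve d R"
  shows "ec_add d (ec_add d P Q) R = ec_add d P (ec_add d Q R)"
proof -
  consider "Q = ec_neg P" | "R = ec_neg Q" | "R = ec_neg P" | "R = ec_neg (ec_add d P Q)"
    | (generic) "Q \<noteq> ec_neg P" "R \<noteq> ec_neg Q" "R \<noteq> ec_neg P" "R \<noteq> ec_neg (ec_add d P Q)"
    by blast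
  then show ?thesis
  proof cases
    case 1
    then show ?thesis using ec_add_neg_cancel_left[OF d P R] by (simp add: ec_add_neg)
  next
    case 2
    then show ?thesis using ec_add_neg_cancel_right[OF d P Q] by (simp add: ec_add_neg)
  next
    case 3
    have "ec_add d (ec_add d P Q) R = Q"
      using 3 ec_add_commute[OF d P Q] ec_add_neg_cancel_right[OF d Q P] by simp
    moreover have "ec_add d P (ec_add d Q R) = Q"
      using 3 ec_add_commute[OF d Q on_curve_ec_neg[OF P]] ec_add_neg_cancel_left[OF d P Q] by simp
    ultimately show ?thesis by simp
  next
    case 4
    have "ec_add d Q R = ec_add d Q (ec_add d (ec_neg Q) (ec_neg P))"
      using 4 ec_neg_ec_add[OF d P Q] ec_add_commute[OF d on_curve_ec_neg[OF P] on_curve_ec_neg[OF Q]]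
      by simp
    also have "\<dots> = ec_neg P" using ec_add_neg_cancel_left[OF d Q on_curve_ec_neg[OF P]] .
    finally show ?thesis using 4 by (simp add: ec_add_neg)
  next
    case generic
    show ?thesis
    proof (cases "P = None \<or> Q = None \<or> R = None")
      case False
      then obtain xa ya xb yb xc yc where "P = Some (xa,ya)" "Q = Some (xb,yb)" "R = Some (xc,yc)"
        by auto
      then show ?thesis using ec_add_assoc_general_position[OF d P Q R _ _ _ generic] by blast
    qed auto
  qed
qed

definition ec_group :: "int \<Rightarrow> ((rat \<times> rat) option) monoid" where
  "ec_group d = \<lparr>carrier = {P. on_curve d P}, monoid.mult = ec_add d, one = None\<rparr>"

lemma ec_group_simps [simp]:
  "carrier (ec_group d) = {P. on_curve d P}" "monoid.mult (ec_group d) = ec_add d"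
  "one (ec_group d) = None"
  by (simp_all add: ec_group_def)

lemma comm_group_ec_group:
  assumes d: "d \<noteq> 0" shows "comm_group (ec_group d)"
proof (rule comm_groupI)
  fix P assume "P \<in> carrier (ec_group d)"
  then show "\<exists>Q\<in>carrier (ec_group d). Q \<otimes>\<^bsub>ec_group d\<^esub> P = \<one>\<^bsub>ec_group d\<^esub>"
    using on_curve_ec_neg[of d P] ec_add_neg[of d P] ec_add_commute[OF d, of P "ec_neg P"]
    by (intro bexI[of _ "ec_neg P"]) auto
qed (auto simp: on_curve_ec_add[OF d] ec_add_assoc[OF d] intro: ec_add_commute[OF d])

lemma on_curve_ec_mul:
  assumes d: "d \<noteq> 0" and P: "on_curve d P" shows "on_curve d (ec_mul d n P)"
  by (induction n) (auto simp: on_curve_ec_add[OF d P])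

lemma ec_mul_eq_pow:
  assumes d: "d \<noteq> 0" and P: "on_curve d P"
  shows "ec_mul d n P = P [^]\<^bsub>ec_group d\<^esub> n"
proof (induction n)
  case (Suc n)
  have "ec_mul d (Suc n) P = ec_add d (ec_mul d n P) P"
    using ec_add_commute[OF d P on_curve_ec_mul[OF d P]] by simp
  then show ?case using Suc by simp
qed simp

section \<open>\<open>p\<close>-adic valuations of rationals\<close>

text \<open>Junk value: \<open>pval p 0 = 0\<close>; statements about \<open>0\<close> go through \<open>pval_ge\<close> instead.\<close>

definition pval :: "int \<Rightarrow> rat \<Rightarrow> int" where
  "pval p r = (case quotient_of r of (a, b) \<Rightarrow> int (multiplicity p a) - int (multiplicity p b))"

definition pval_ge :: "int \<Rightarrow> int \<Rightarrow> rat \<Rightarrow> bool" where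
  "pval_ge p k r \<longleftrightarrow> r = 0 \<or> k \<le> pval p r"

lemma rat_fracE:
  fixes r :: rat
  obtains a b :: int where "b \<noteq> 0" "r = of_int a / of_int b" "r \<noteq> 0 \<Longrightarrow> a \<noteq> 0"
proof -
  obtain a b where q: "quotient_of r = (a, b)" by (cases "quotient_of r") auto
  show ?thesis
    using that[of b a] quotient_of_div[OF q] quotient_of_denom_pos[OF q] by auto
qed

lemma pval_frac:
  assumes p: "prime p" and a: "a \<noteq> 0" and b: "b \<noteq> 0"
  shows "pval p (of_int a / of_int b) = int (multiplicity p a) - int (multiplicity p b)"
proof -
  obtain a' b' where q: "quotient_of (of_int a / of_int b) = (a', b')"
    by (cases "quotient_of (of_int a / of_int b)") auto
  have b': "b' > 0" using quotient_of_denom_pos[OF q] .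
  have "(of_int a / of_int b :: rat) = of_int a' / of_int b'" using quotient_of_div[OF q] .
  then have "(of_int (a' * b) :: rat) = of_int (a * b')" using b b' by (simp add: field_simps)
  then have e: "a' * b = a * b'" by (simp only: of_int_eq_iff)
  have a': "a' \<noteq> 0" using e a b' by auto
  have pe: "prime_elem p" using prime_imp_prime_elem[OF p] .
  have "multiplicity p (a' * b) = multiplicity p (a * b')" using e by simp
  then have "multiplicity p a' + multiplicity p b = multiplicity p a + multiplicity p b'"
    using prime_elem_multiplicity_mult_distrib[OF pe a' b] prime_elem_multiplicity_mult_distrib[OF pe a] b'
    by simp
  then show ?thesis unfolding pval_def q by simp
qed

lemma pval_of_int: "prime p \<Longrightarrow> a \<noteq> 0 \<Longrightarrow> pval p (of_int a) = int (multiplicity p a)"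
  using pval_frac[of p a 1] by simp

lemma pval_one [simp]: "prime p \<Longrightarrow> pval p 1 = 0"
  using pval_of_int[of p 1] by simp

lemma pval_mult:
  assumes p: "prime p" and r: "r \<noteq> 0" and s: "s \<noteq> 0"
  shows "pval p (r * s) = pval p r + pval p s"
proof -
  obtain a b where ab: "b \<noteq> 0" "r = of_int a / of_int b" "a \<noteq> 0" using rat_fracE[of r] r by metis
  obtain c e where ce: "e \<noteq> 0" "s = of_int c / of_int e" "c \<noteq> 0" using rat_fracE[of s] s by metis
  have pe: "prime_elem p" using prime_imp_prime_elem[OF p] .
  have "r * s = of_int (a*c) / of_int (b*e)" using ab ce by simp
  then have "pval p (r * s) = int (multiplicity p (a*c)) - int (multiplicity p (b*e))"
    using pval_frac[OF p, of "a*c" "b*e"] ab ce by simp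
  then show ?thesis using pval_frac[OF p] ab ce
    prime_elem_multiplicity_mult_distrib[OF pe, of a c] prime_elem_multiplicity_mult_distrib[OF pe, of b e]
    by simp
qed

lemma pval_divide:
  assumes p: "prime p" and r: "r \<noteq> 0" and s: "s \<noteq> 0"
  shows "pval p (r / s) = pval p r - pval p s"
proof -
  have "pval p (r / s) + pval p s = pval p r"
    using pval_mult[OF p, of "r / s" s] r s by simp
  then show ?thesis by simp
qed

lemma pval_power:
  assumes p: "prime p" and r: "r \<noteq> 0" shows "pval p (r ^ n) = int n * pval p r"
proof (induction n)
  case (Suc n) then show ?case using pval_mult[OF p r, of "r^n"] r by (simp add: algebra_simps)
qed (use p in simp)

lemma pval_uminus:
  assumes p: "prime p" shows "pval p (- r) = pval p r"
proof (cases "r = 0")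
  case False
  have "pval p (-1) = 0" using pval_of_int[OF p, of "-1"] by simp
  then show ?thesis using pval_mult[OF p, of "-1" r] False by simp
qed simp

lemma pval_add:
  assumes p: "prime p" and r: "r \<noteq> 0" and s: "s \<noteq> 0" and rs: "r + s \<noteq> 0"
  shows "min (pval p r) (pval p s) \<le> pval p (r + s)"
proof -
  obtain a b where ab: "b \<noteq> 0" "r = of_int a / of_int b" "a \<noteq> 0" using rat_fracE[of r] r by metis
  obtain c e where ce: "e \<noteq> 0" "s = of_int c / of_int e" "c \<noteq> 0" using rat_fracE[of s] s by metis
  let ?m = "\<lambda>z. int (multiplicity p z)"
  have pe: "prime_elem p" and np: "\<not> is_unit p"
    using prime_imp_prime_elem[OF p] p by (auto simp: not_prime_unit)
  have sum: "r + s = of_int (a*e + c*b) / of_int (b*e)" using ab ce by (simp add: field_simps)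
  have n0: "a*e + c*b \<noteq> 0"
  proof
    assume "a*e + c*b = 0"
    then show False using sum rs by simp
  qed
  have mult: "?m (x*y) = ?m x + ?m y" if "x \<noteq> 0" "y \<noteq> 0" for x y
    using prime_elem_multiplicity_mult_distrib[OF pe that] by simp
  define k where "k = min (multiplicity p (a*e)) (multiplicity p (c*b))"
  have "p ^ k dvd a*e + c*b"
    using multiplicity_dvd'[of k p "a*e"] multiplicity_dvd'[of k p "c*b"] by (simp add: k_def)
  then have "k \<le> multiplicity p (a*e + c*b)" using multiplicity_geI[OF n0 np] by blast
  moreover have "pval p r = ?m (a*e) - ?m (b*e)" "pval p s = ?m (c*b) - ?m (b*e)"
    using pval_frac[OF p] ab ce mult by simp_all
  moreover have "pval p (r + s) = ?m (a*e + c*b) - ?m (b*e)"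
    unfolding sum by (rule pval_frac[OF p n0]) (use ab ce in simp)
  ultimately show ?thesis unfolding k_def by linarith
qed

lemma pval_ge_0 [simp]: "pval_ge p k 0"
  by (simp add: pval_ge_def)

lemma pval_ge_mono: "pval_ge p k a \<Longrightarrow> j \<le> k \<Longrightarrow> pval_ge p j a"
  unfolding pval_ge_def by auto

lemma pval_ge_uminus: "prime p \<Longrightarrow> pval_ge p k a \<Longrightarrow> pval_ge p k (- a)"
  unfolding pval_ge_def by (auto simp: pval_uminus)

lemma pval_ge_add:
  assumes p: "prime p" and "pval_ge p k a" "pval_ge p k b" shows "pval_ge p k (a + b)"
  using assms pval_add[OF p, of a b] unfolding pval_ge_def by fastforce

lemma pval_ge_diff: "prime p \<Longrightarrow> pval_ge p k a \<Longrightarrow> pval_ge p k b \<Longrightarrow> pval_ge p k (a - b)"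
  using pval_ge_add[of p k a "- b"] pval_ge_uminus[of p k b] by simp

lemma pval_ge_mult:
  assumes p: "prime p" and "pval_ge p j a" "pval_ge p k b" and "m \<le> j + k"
  shows "pval_ge p m (a * b)"
proof (cases "a = 0 \<or> b = 0")
  case False
  then show ?thesis using assms pval_mult[OF p, of a b] unfolding pval_ge_def by auto
qed auto

lemma pval_ge_mult3:
  assumes "prime p" "pval_ge p i a" "pval_ge p j b" "pval_ge p k c" "m \<le> i + j + k"
  shows "pval_ge p m (a * b * c)"
  using assms pval_ge_mult[of p i a j b "i + j"] pval_ge_mult[of p "i + j" "a * b" k c m] by simp

lemma pval_ge_of_int: "prime p \<Longrightarrow> pval_ge p 0 (of_int z)"
  by (cases "z = 0") (simp_all add: pval_ge_def pval_of_int)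

lemma pval_ge_numeral: "prime p \<Longrightarrow> pval_ge p 0 (numeral z)"
  using pval_ge_of_int[of p "numeral z"] by simp

lemma pval_ge_Ints: "prime p \<Longrightarrow> r \<in> \<int> \<Longrightarrow> pval_ge p 0 r"
  by (auto elim: Ints_cases simp: pval_ge_of_int)

lemma pval_ge_unit:
  assumes p: "prime p" and u: "pval_ge p k (u - 1)" and k: "1 \<le> k"
  shows "u \<noteq> 0" and "pval p u = 0"
proof -
  define w where "w = u - 1"
  have w: "pval_ge p 1 w" using pval_ge_mono[OF u k] by (simp add: w_def)
  have "1 + w \<noteq> 0 \<and> pval p (1 + w) = 0"
  proof (cases "w = 0")
    case False
    have vw: "pval p w > 0" using w False by (simp add: pval_ge_def)
    have nz: "1 + w \<noteq> 0"
    proof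
      assume "1 + w = 0"
      then have "w = -1" by simp
      then show False using vw pval_uminus[OF p, of 1] p by simp
    qed
    have "0 \<le> pval p (1 + w)" using pval_add[OF p _ False nz] vw p by simp
    moreover have "min (pval p (1 + w)) (pval p (- w)) \<le> 0"
      using pval_add[OF p nz, of "- w"] False p by simp
    ultimately show ?thesis using nz vw pval_uminus[OF p, of w] by linarith
  qed (use p in simp)
  then show "u \<noteq> 0" "pval p u = 0" by (simp_all add: w_def)
qed

lemma pval_ge_div_unit:
  assumes p: "prime p" and a: "pval_ge p k a" and b: "b \<noteq> 0" "pval p b = 0"
  shows "pval_ge p k (a / b)"
proof (cases "a = 0")
  case False
  then show ?thesis using a b pval_divide[OF p False b(1)] unfolding pval_ge_def by simp
qed simp

lemma pval_prime_le_1: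
  assumes p: "prime p" and l: "prime (l::int)" shows "pval p (of_int l) \<le> 1"
proof (cases "p = l")
  case True
  then show ?thesis
    using pval_of_int[OF p, of p] p multiplicity_prime[OF prime_imp_prime_elem[OF p]] by auto
next
  case False then show ?thesis using pval_of_int[OF p, of l] prime_multiplicity_other[OF p l] l
    by auto
qed

lemma Ints_of_pval_ge:
  assumes "\<And>p. prime p \<Longrightarrow> pval_ge p 0 r" shows "r \<in> \<int>"
proof -
  obtain a b where q: "quotient_of r = (a, b)" by (cases "quotient_of r") auto
  have r: "r = of_int a / of_int b" and b: "b > 0" and cop: "coprime a b"
    using quotient_of_div[OF q] quotient_of_denom_pos[OF q] quotient_of_coprime[OF q] by auto
  show ?thesis
  proof (rule ccontr)
    assume "r \<notin> \<int>"
    then have "\<not> is_unit b" using r b by auto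
    then obtain p where p: "prime p" "p dvd b" using prime_factor_int[of b] b by auto
    have pa: "\<not> p dvd a" using p cop by (meson coprime_common_divisor not_prime_unit)
    then have a0: "a \<noteq> 0" by auto
    have "multiplicity p a = 0" using pa by (rule not_dvd_imp_multiplicity_0)
    moreover have "multiplicity p b \<ge> 1"
      using p multiplicity_geI[of b p 1] b not_prime_unit by auto
    ultimately have "pval p r < 0" using pval_frac[OF p(1) a0, of b] b r by simp
    then show False using assms[OF p(1)] r a0 b by (simp add: pval_ge_def)
  qed
qed

lemma Ints_of_square_Ints:
  fixes r :: rat assumes "r^2 \<in> \<int>" shows "r \<in> \<int>"
proof (rule Ints_of_pval_ge)
  fix p :: int assume p: "prime p"
  show "pval_ge p 0 r"
  proof (cases "r = 0")
    case False
    have "0 \<le> pval p (r^2)" using pval_ge_Ints[OF p assms] False by (simp add: pval_ge_def)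
    then show ?thesis using pval_power[OF p False, of 2] False by (simp add: pval_ge_def)
  qed simp
qed

section \<open>Integrality of points of prime order\<close>

definition pole_ge :: "int \<Rightarrow> int \<Rightarrow> rat \<Rightarrow> bool" where
  "pole_ge p n X \<longleftrightarrow> X \<noteq> 0 \<and> pval p X \<le> -2*n"

lemma formal_curve_eq:
  fixes A B C X Y :: "'a :: field"
  assumes Y: "Y \<noteq> 0" and c: "Y^2 = X^3 + A*X^2 + B*X + C"
  shows "1/Y = (X/Y)^3 + A*(X/Y)^2*(1/Y) + B*(X/Y)*(1/Y)^2 + C*(1/Y)^3"
proof -
  have "(X/Y)^3 + A*(X/Y)^2*(1/Y) + B*(X/Y)*(1/Y)^2 + C*(1/Y)^3 = (X^3 + A*X^2 + B*X + C)/Y^3"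
    using Y by (simp add: field_simps power2_eq_square power3_eq_cube)
  also have "\<dots> = 1/Y" using Y unfolding c[symmetric] by (simp add: power2_eq_square power3_eq_cube)
  finally show ?thesis by simp
qed

lemma formal_chord_identity:
  fixes A B C t1 s1 t2 s2 :: "'a :: comm_ring_1"
  assumes "s1 = t1^3 + A*t1^2*s1 + B*t1*s1^2 + C*s1^3"
    and "s2 = t2^3 + A*t2^2*s2 + B*t2*s2^2 + C*s2^3"
  shows "(s2 - s1) * (1 - A*t1^2 - B*t1*(s1+s2) - C*(s1^2 + s1*s2 + s2^2))
       = (t2 - t1) * (t1^2 + t1*t2 + t2^2 + A*(t1+t2)*s2 + B*s2^2)"
proof -
  have "(s2 - s1) * (1 - A*t1^2 - B*t1*(s1+s2) - C*(s1^2 + s1*s2 + s2^2))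
      - (t2 - t1) * (t1^2 + t1*t2 + t2^2 + A*(t1+t2)*s2 + B*s2^2)
      = (s2 - (t2^3 + A*t2^2*s2 + B*t2*s2^2 + C*s2^3)) - (s1 - (t1^3 + A*t1^2*s1 + B*t1*s1^2 + C*s1^3))"
    by (simp add: algebra_simps power2_eq_square power3_eq_cube)
  then show ?thesis using assms by simp
qed

lemma formal_tangent_identity:
  fixes A B C X Y lam mu :: "'a :: field"
  assumes Y: "Y \<noteq> 0" and c: "Y^2 = X^3 + A*X^2 + B*X + C"
    and tg: "2*lam*Y = 3*X^2 + 2*A*X + B" and l: "Y = lam*X + mu"
  shows "lam * (1 - A*(X/Y)^2 - 2*B*(X/Y)*(1/Y) - 3*C*(1/Y)^2)
       + mu * (3*(X/Y)^2 + 2*A*(X/Y)*(1/Y) + B*(1/Y)^2) = 0"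
proof -
  let ?E = "lam * (1 - A*(X/Y)^2 - 2*B*(X/Y)*(1/Y) - 3*C*(1/Y)^2)
       + mu * (3*(X/Y)^2 + 2*A*(X/Y)*(1/Y) + B*(1/Y)^2)"
  have m: "mu = Y - lam*X" using l by simp
  have "Y^3 * ?E = Y * (lam * (Y^2 - A*X^2 - 2*B*X - 3*C - X*(3*X^2 + 2*A*X + B))
      + Y*(3*X^2 + 2*A*X + B))"
    using Y unfolding m by (simp add: field_simps power2_eq_square power3_eq_cube)
  also have "Y^2 - A*X^2 - 2*B*X - 3*C - X*(3*X^2 + 2*A*X + B) = -2*Y^2"
    using c by (simp add: algebra_simps power2_eq_square power3_eq_cube)
  also have "Y*(3*X^2 + 2*A*X + B) = 2*lam*Y^2" using tg by (simp add: power2_eq_square algebra_simps)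
  finally have "Y^3 * ?E = 0" by simp
  then show ?thesis using Y by simp
qed

locale integral_cubic =
  fixes p :: int and A B C :: rat
  assumes p: "prime p" and A: "pval_ge p 0 A" and B: "pval_ge p 0 B" and C: "pval_ge p 0 C"
begin

lemma cubic_pval_pole:
  assumes X: "X \<noteq> 0" "pval p X < 0"
  shows "X^3 + A*X^2 + B*X + C \<noteq> 0" and "pval p (X^3 + A*X^2 + B*X + C) = 3 * pval p X"
proof -
  define w where "w = 1 / X"
  have "pval p w = - pval p X" using pval_divide[OF p, of 1 X] X p by (simp add: w_def)
  then have w: "pval_ge p 1 w" using X by (simp add: pval_ge_def w_def)
  define u where "u = A*w + B*w*w + C*w*w*w"
  have "pval_ge p 1 u" unfolding u_def
    by (intro pval_ge_add[OF p] pval_ge_mult[OF p A w] pval_ge_mult3[OF p B w w]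
        pval_ge_mult[OF p pval_ge_mult3[OF p C w w, of 2] w]) auto
  then have u: "1 + u \<noteq> 0" "pval p (1 + u) = 0" using pval_ge_unit[OF p, of 1 "1 + u"] by simp_all
  have g: "X^3 + A*X^2 + B*X + C = X^3 * (1 + u)" using X unfolding u_def w_def
    by (simp add: field_simps power2_eq_square power3_eq_cube)
  show "X^3 + A*X^2 + B*X + C \<noteq> 0" using g X u by simp
  show "pval p (X^3 + A*X^2 + B*X + C) = 3 * pval p X"
    using g pval_mult[OF p, of "X^3" "1 + u"] pval_power[OF p X(1), of 3] X u by simp
qed

lemma pole_pvals:
  assumes c: "Y^2 = X^3 + A*X^2 + B*X + C" and X: "X \<noteq> 0" "pval p X < 0"
  obtains k where "Y \<noteq> 0" "k \<ge> 1" "pval p X = -2*k" "pval p Y = -3*k"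
proof -
  have Y: "Y \<noteq> 0" using cubic_pval_pole[OF X] c by auto
  have e: "2 * pval p Y = 3 * pval p X"
    using cubic_pval_pole[OF X] c pval_power[OF p Y, of 2] by simp
  then have "even (pval p X)" by presburger
  then obtain k where "pval p X = -2*k" by (metis dvd_def minus_mult_minus mult_minus_right)
  moreover have "pval p Y = -3*k" "k \<ge> 1" using e X calculation by linarith+
  ultimately show ?thesis using that Y by blast
qed

lemma formal_params_pval:
  assumes c: "Y^2 = X^3 + A*X^2 + B*X + C" and X: "pole_ge p n X" and n: "n \<ge> 1"
  shows "Y \<noteq> 0" and "pval_ge p n (X/Y)" and "pval_ge p (3*n) (1/Y)"
proof -
  have X': "X \<noteq> 0" "pval p X < 0" using X n by (auto simp: pole_ge_def)
  obtain k where Y: "Y \<noteq> 0" and k: "k \<ge> 1" "pval p X = -2*k" "pval p Y = -3*k"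
    using pole_pvals[OF c X'] .
  have kn: "k \<ge> n" using k X by (simp add: pole_ge_def)
  show "Y \<noteq> 0" using Y .
  show "pval_ge p n (X/Y)" using pval_divide[OF p X'(1) Y] k kn X' Y by (simp add: pval_ge_def)
  show "pval_ge p (3*n) (1/Y)" using pval_divide[OF p _ Y, of 1] k kn p Y by (simp add: pval_ge_def)
qed

end

text \<open>In the parameters \<open>t = X/Y\<close>, \<open>s = 1/Y\<close> a chord \<open>Y = lam X + mu\<close> becomes the line
  \<open>s = al t + be\<close> with \<open>al = -lam/mu\<close>, \<open>be = 1/mu\<close>. For two points whose \<open>X\<close> has a pole of
  order at least \<open>2n\<close>, \<open>v(al) \<ge> 2n\<close> and \<open>v(be) \<ge> 3n\<close>, and Vieta's formulas make the sum
  \<open>t1 + t2 + t3\<close> over the three intersection points \<open>be\<close> times a fraction with unit denominator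
  (\<open>params_sum_eq\<close>): the chord-and-tangent law is additive in \<open>t\<close> modulo \<open>p^(3n)\<close>.\<close>

locale formal_chord = integral_cubic +
  fixes n :: int and X1 Y1 X2 Y2 X3 lam mu :: rat
  assumes n: "1 \<le> n"
    and on1: "Y1^2 = X1^3 + A*X1^2 + B*X1 + C" and on2: "Y2^2 = X2^3 + A*X2^2 + B*X2 + C"
    and on3: "(lam*X3+mu)^2 = X3^3 + A*X3^2 + B*X3 + C"
    and line1: "Y1 = lam*X1 + mu" and line2: "Y2 = lam*X2 + mu"
    and vieta1: "X1 + X2 + X3 = lam^2 - A" and vieta2: "X1*X2 + X1*X3 + X2*X3 = B - 2*lam*mu"
    and vieta3: "X1*X2*X3 = mu^2 - C"
    and pole1: "pole_ge p n X1" and pole2: "pole_ge p n X2"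
    and tangent: "X1 = X2 \<Longrightarrow> Y1 = Y2 \<and> 2*lam*Y1 = 3*X1^2 + 2*A*X1 + B"
begin

lemma params:
  "Y1 \<noteq> 0" "Y2 \<noteq> 0" "pval_ge p n (X1/Y1)" "pval_ge p n (X2/Y2)"
  "pval_ge p (3*n) (1/Y1)" "pval_ge p (3*n) (1/Y2)"
  using formal_params_pval[OF on1 pole1 n] formal_params_pval[OF on2 pole2 n] by auto

lemma params_curve:
  "1/Y1 = (X1/Y1)^3 + A*(X1/Y1)^2*(1/Y1) + B*(X1/Y1)*(1/Y1)^2 + C*(1/Y1)^3"
  "1/Y2 = (X2/Y2)^3 + A*(X2/Y2)^2*(1/Y2) + B*(X2/Y2)*(1/Y2)^2 + C*(1/Y2)^3"
  using formal_curve_eq[OF params(1) on1] formal_curve_eq[OF params(2) on2] .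

lemma params_line: "lam*(X1/Y1) + mu*(1/Y1) = 1" "lam*(X2/Y2) + mu*(1/Y2) = 1"
proof -
  have "lam*(X/Y) + mu*(1/Y) = (lam*X + mu)/Y" for X Y :: rat by (simp add: add_divide_distrib)
  then show "lam*(X1/Y1) + mu*(1/Y1) = 1" "lam*(X2/Y2) + mu*(1/Y2) = 1"
    using params(1,2) line1 line2 by simp_all
qed

lemma slope_pval_chord:
  assumes ne: "X1 \<noteq> X2"
  shows "mu \<noteq> 0 \<and> pval_ge p (2*n) (- lam/mu)"
proof -
  define t1 t2 r1 r2 where "t1 = X1/Y1" and "t2 = X2/Y2" and "r1 = 1/Y1" and "r2 = 1/Y2"
  note v = params(3-6)[folded t1_def t2_def r1_def r2_def]
  define Dn where "Dn = 1 - A*t1^2 - B*t1*(r1+r2) - C*(r1^2 + r1*r2 + r2^2)"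
  define Nm where "Nm = t1^2 + t1*t2 + t2^2 + A*(t1+t2)*r2 + B*r2^2"
  have iden: "(r2 - r1) * Dn = (t2 - t1) * Nm" unfolding Dn_def Nm_def
    by (rule formal_chord_identity) (use params_curve in \<open>simp_all add: t1_def t2_def r1_def r2_def\<close>)
  have "Dn - 1 = - (A*t1*t1 + B*t1*(r1+r2) + C*r1*r1 + C*r1*r2 + C*r2*r2)"
    unfolding Dn_def by (simp add: algebra_simps power2_eq_square)
  moreover have "pval_ge p (2*n) (A*t1*t1 + B*t1*(r1+r2) + C*r1*r1 + C*r1*r2 + C*r2*r2)"
    by (intro pval_ge_add[OF p] pval_ge_mult3[OF p A v(1,1)] pval_ge_mult3[OF p B v(1) pval_ge_add[OF p v(3,4)]]
        pval_ge_mult3[OF p C v(3,3)] pval_ge_mult3[OF p C v(3,4)]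
        pval_ge_mult3[OF p C v(4,4)]) (use n in auto)
  ultimately have "pval_ge p (2*n) (Dn - 1)" using pval_ge_uminus[OF p] by metis
  then have Dn: "Dn \<noteq> 0" "pval p Dn = 0" using pval_ge_unit[OF p] n by simp_all
  have "Nm = t1*t1 + t1*t2 + t2*t2 + A*t1*r2 + A*t2*r2 + B*r2*r2"
    unfolding Nm_def by (simp add: algebra_simps power2_eq_square)
  moreover have "pval_ge p (2*n) (t1*t1 + t1*t2 + t2*t2 + A*t1*r2 + A*t2*r2 + B*r2*r2)"
    by (intro pval_ge_add[OF p] pval_ge_mult[OF p v(1,1)] pval_ge_mult[OF p v(1,2)]
        pval_ge_mult[OF p v(2,2)] pval_ge_mult3[OF p A v(1,4)] pval_ge_mult3[OF p A v(2,4)]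
        pval_ge_mult3[OF p B v(4,4)]) (use n in auto)
  ultimately have vNm: "pval_ge p (2*n) Nm" by simp
  have tt: "t1 \<noteq> t2"
  proof
    assume e: "t1 = t2"
    then have "r1 = r2" using iden Dn by simp
    then show False using e ne params(1) unfolding t1_def t2_def r1_def r2_def by simp
  qed
  have ll: "lam*(t2 - t1) + mu*(r2 - r1) = 0"
    using params_line unfolding t1_def t2_def r1_def r2_def by (simp add: algebra_simps)
  have mu0: "mu \<noteq> 0"
  proof
    assume "mu = 0"
    then have "lam = 0" using ll tt by simp
    then show False using \<open>mu = 0\<close> line1 params(1) by simp
  qed
  have "r2 - r1 = (t2 - t1) * Nm / Dn" using iden Dn(1) by (simp add: eq_divide_eq)
  then have "(t2 - t1) * lam = (t2 - t1) * (- mu * (Nm / Dn))"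
    using ll by (simp add: algebra_simps)
  then have "lam = - mu * (Nm / Dn)" using tt by (metis mult_left_cancel right_minus_eq)
  then have "- lam/mu = Nm / Dn" using mu0 by simp
  then show ?thesis using pval_ge_div_unit[OF p vNm Dn] mu0 by simp
qed

lemma slope_pval_tangent:
  assumes eq: "X1 = X2"
  shows "mu \<noteq> 0 \<and> pval_ge p (2*n) (- lam/mu)"
proof -
  define t1 r1 where "t1 = X1/Y1" and "r1 = 1/Y1"
  note v = params(3,5)[folded t1_def r1_def]
  have tg: "2*lam*Y1 = 3*X1^2 + 2*A*X1 + B" using tangent eq by blast
  define Dn where "Dn = 1 - A*t1^2 - 2*B*t1*r1 - 3*C*r1^2"
  define Nm where "Nm = 3*t1^2 + 2*A*t1*r1 + B*r1^2"
  have iden: "lam*Dn + mu*Nm = 0" unfolding Dn_def Nm_def t1_def r1_def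
    by (rule formal_tangent_identity[OF params(1) on1 tg line1])
  have "Dn - 1 = - (A*t1*t1 + (2*B)*t1*r1 + (3*C)*r1*r1)"
    unfolding Dn_def by (simp add: algebra_simps power2_eq_square)
  moreover have "pval_ge p (2*n) (A*t1*t1 + (2*B)*t1*r1 + (3*C)*r1*r1)"
    by (intro pval_ge_add[OF p] pval_ge_mult3[OF p A v(1,1)]
        pval_ge_mult3[OF p pval_ge_mult[OF p pval_ge_numeral[OF p] B, of 0] v(1,2)]
        pval_ge_mult3[OF p pval_ge_mult[OF p pval_ge_numeral[OF p] C, of 0] v(2,2)]) (use n in auto)
  ultimately have "pval_ge p (2*n) (Dn - 1)" using pval_ge_uminus[OF p] by metis
  then have Dn: "Dn \<noteq> 0" "pval p Dn = 0" using pval_ge_unit[OF p] n by simp_all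
  have "Nm = 3*t1*t1 + (2*A)*t1*r1 + B*r1*r1"
    unfolding Nm_def by (simp add: algebra_simps power2_eq_square)
  moreover have "pval_ge p (2*n) (3*t1*t1 + (2*A)*t1*r1 + B*r1*r1)"
    by (intro pval_ge_add[OF p] pval_ge_mult3[OF p pval_ge_numeral[OF p] v(1,1)]
        pval_ge_mult3[OF p pval_ge_mult[OF p pval_ge_numeral[OF p] A, of 0] v(1,2)]
        pval_ge_mult3[OF p B v(2,2)]) (use n in auto)
  ultimately have vNm: "pval_ge p (2*n) Nm" by simp
  have mu0: "mu \<noteq> 0"
  proof
    assume "mu = 0"
    then have "lam = 0" using iden Dn by simp
    then show False using \<open>mu = 0\<close> line1 params(1) by simp
  qed
  have "- lam/mu = Nm/Dn" using iden mu0 Dn(1) by (simp add: field_simps add_eq_0_iff)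
  then show ?thesis using pval_ge_div_unit[OF p vNm Dn] mu0 by simp
qed

lemma slope_pval: "mu \<noteq> 0" "pval_ge p (2*n) (- lam/mu)"
  using slope_pval_chord slope_pval_tangent by blast+

lemma intercept_pval: "pval_ge p (3*n) (1/mu)"
proof -
  have "1/mu = (lam*(X1/Y1) + mu*(1/Y1))/mu" using params_line(1) by simp
  also have "\<dots> = 1/Y1 - (- lam/mu)*(X1/Y1)"
    using slope_pval(1) by (simp add: add_divide_distrib)
  finally show ?thesis
    using pval_ge_diff[OF p params(5) pval_ge_mult[OF p slope_pval(2) params(3)]] by simp
qed

lemma third_nonzero: "lam*X3 + mu \<noteq> 0"
proof
  assume z: "lam*X3 + mu = 0"
  then have lam: "lam \<noteq> 0" using slope_pval(1) by auto
  have X3: "X3 = 1/(- lam/mu)" using z lam slope_pval(1) by (simp add: field_simps add_eq_0_iff)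
  then have "X3 \<noteq> 0" using lam slope_pval(1) by simp
  moreover have "pval p X3 < 0"
    using slope_pval(2) lam slope_pval(1) pval_divide[OF p, of 1 "- lam/mu"] n p
    unfolding X3 by (simp add: pval_ge_def)
  ultimately have "X3^3 + A*X3^2 + B*X3 + C \<noteq> 0" by (rule cubic_pval_pole)
  then show False using on3 z by simp
qed

lemma params_sum_eq:
  defines "al \<equiv> - lam/mu"
  shows "X1/Y1 + X2/Y2 + X3/(lam*X3 + mu)
           = - ((1/mu) * (A + 2*B*al + 3*C*al^2)) / (1 + A*al + B*al^2 + C*al^3)"
proof -
  define Z3 where "Z3 = lam*X3 + mu"
  have Z3: "Z3 \<noteq> 0" using third_nonzero by (simp add: Z3_def)
  have mu: "mu \<noteq> 0" using slope_pval(1) .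
  define Den where "Den = mu^3 - A*lam*mu^2 + B*lam^2*mu - C*lam^3"
  define Num where "Num = A*mu^2 - 2*B*lam*mu + 3*C*lam^2"
  have "Y1*Y2*Z3 = lam^3*(X1*X2*X3) + lam^2*mu*(X1*X2+X1*X3+X2*X3) + lam*mu^2*(X1+X2+X3) + mu^3"
    unfolding line1 line2 Z3_def by (simp add: algebra_simps power2_eq_square power3_eq_cube)
  also have "\<dots> = Den"
    unfolding vieta1 vieta2 vieta3 Den_def by (simp add: algebra_simps power2_eq_square power3_eq_cube)
  finally have D: "Y1*Y2*Z3 = Den" .
  have "X1*Y2*Z3 + X2*Y1*Z3 + X3*Y1*Y2
      = 3*lam^2*(X1*X2*X3) + 2*lam*mu*(X1*X2+X1*X3+X2*X3) + mu^2*(X1+X2+X3)"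
    unfolding line1 line2 Z3_def by (simp add: algebra_simps power2_eq_square power3_eq_cube)
  also have "\<dots> = - Num"
    unfolding vieta1 vieta2 vieta3 Num_def by (simp add: algebra_simps power2_eq_square power3_eq_cube)
  finally have N: "X1*Y2*Z3 + X2*Y1*Z3 + X3*Y1*Y2 = - Num" .
  have "X1/Y1 + X2/Y2 + X3/Z3 = - Num / Den"
    using params(1,2) Z3 unfolding D[symmetric] N[symmetric] by (simp add: field_simps)
  moreover have "Den = mu^3 * (1 + A*al + B*al^2 + C*al^3)"
    unfolding Den_def al_def using mu by (simp add: field_simps power2_eq_square power3_eq_cube)
  moreover have "Num = mu^3 * ((1/mu) * (A + 2*B*al + 3*C*al^2))"
    unfolding Num_def al_def using mu by (simp add: field_simps power2_eq_square power3_eq_cube)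
  ultimately show ?thesis using mu unfolding Z3_def by simp
qed

lemma params_sum_pval: "pval_ge p (3*n) (X1/Y1 + X2/Y2 + X3/(lam*X3 + mu))"
proof -
  define al where "al = - lam/mu"
  have val: "pval_ge p (2*n) al" using slope_pval(2) by (simp add: al_def)
  have "pval_ge p (2*n) (A*al + B*al*al + C*al*al*al)"
    by (intro pval_ge_add[OF p] pval_ge_mult[OF p A val] pval_ge_mult3[OF p B val val]
        pval_ge_mult[OF p pval_ge_mult3[OF p C val val, of "4*n"] val]) (use n in auto)
  then have "pval_ge p (2*n) ((1 + A*al + B*al^2 + C*al^3) - 1)"
    by (simp add: algebra_simps power2_eq_square power3_eq_cube)
  then have K2: "1 + A*al + B*al^2 + C*al^3 \<noteq> 0" "pval p (1 + A*al + B*al^2 + C*al^3) = 0"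
    using pval_ge_unit[OF p] n by simp_all
  have vK1: "pval_ge p 0 (A + (2*B)*al + (3*C)*(al*al))"
    by (intro pval_ge_add[OF p] A pval_ge_mult[OF p pval_ge_mult[OF p pval_ge_numeral[OF p] B] val]
        pval_ge_mult[OF p pval_ge_mult[OF p pval_ge_numeral[OF p] C] pval_ge_mult[OF p val val]])
      (use n in auto)
  have "pval_ge p (3*n) ((1/mu) * (A + (2*B)*al + (3*C)*(al*al)))"
    using pval_ge_mult[OF p intercept_pval vK1] by simp
  then have "pval_ge p (3*n) ((1/mu) * (A + 2*B*al + 3*C*al^2))"
    by (simp add: power2_eq_square mult.assoc)
  then show ?thesis
    unfolding params_sum_eq al_def[symmetric]
    using pval_ge_div_unit[OF p pval_ge_uminus[OF p] K2] by blast
qed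

lemma third_pole: "pole_ge p n X3"
proof -
  define Z3 where "Z3 = lam*X3 + mu"
  have Z3: "Z3 \<noteq> 0" using third_nonzero by (simp add: Z3_def)
  define t3 r3 where "t3 = X3/Z3" and "r3 = 1/Z3"
  have "t3 = (X1/Y1 + X2/Y2 + X3/Z3) - X1/Y1 - X2/Y2" by (simp add: t3_def)
  then have vt3: "pval_ge p n t3"
    using pval_ge_diff[OF p pval_ge_diff[OF p pval_ge_mono[OF params_sum_pval] params(3)] params(4)] n
    by (simp add: Z3_def)
  have "lam*t3 + mu*r3 = (lam*X3 + mu)/Z3" unfolding t3_def r3_def by (simp add: add_divide_distrib)
  then have "mu*r3 = 1 - lam*t3" using Z3 by (simp add: Z3_def)
  then have "r3 = (1 - lam*t3)/mu" using slope_pval(1) by (simp add: eq_divide_eq mult.commute)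
  then have "r3 = (- lam/mu)*t3 + 1/mu" by (simp add: diff_divide_distrib)
  then have vr3: "pval_ge p (3*n) r3"
    using pval_ge_add[OF p pval_ge_mult[OF p slope_pval(2) vt3] intercept_pval] by simp
  have cr3: "r3 = t3^3 + A*t3^2*r3 + B*t3*r3^2 + C*r3^3"
    unfolding t3_def r3_def using formal_curve_eq[OF Z3, of X3 A B C] on3 by (simp add: Z3_def)
  define U where "U = 1 - A*t3^2 - B*t3*r3 - C*r3^2"
  have Ue: "r3 * U = t3^3"
    using cr3 unfolding U_def by (simp add: algebra_simps power2_eq_square power3_eq_cube)
  have "pval_ge p (2*n) (A*t3*t3 + B*t3*r3 + C*r3*r3)"
    by (intro pval_ge_add[OF p] pval_ge_mult3[OF p A vt3 vt3] pval_ge_mult3[OF p B vt3 vr3]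
        pval_ge_mult3[OF p C vr3 vr3]) (use n in auto)
  moreover have "U - 1 = - (A*t3*t3 + B*t3*r3 + C*r3*r3)"
    by (simp add: U_def algebra_simps power2_eq_square)
  ultimately have "pval_ge p (2*n) (U - 1)" using pval_ge_uminus[OF p] by metis
  then have U: "U \<noteq> 0" "pval p U = 0" using pval_ge_unit[OF p] n by simp_all
  have r30: "r3 \<noteq> 0" using Z3 by (simp add: r3_def)
  then have t30: "t3 \<noteq> 0" using Ue U by auto
  have "pval p r3 = 3 * pval p t3"
    using arg_cong[OF Ue, of "pval p"] pval_mult[OF p r30 U(1)] U pval_power[OF p t30, of 3] by simp
  moreover have "X3 = t3 / r3" using Z3 by (simp add: t3_def r3_def)
  ultimately have "X3 \<noteq> 0" "pval p X3 = -2 * pval p t3"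
    using pval_divide[OF p t30 r30] t30 r30 by simp_all
  then show ?thesis using vt3 t30 by (simp add: pole_ge_def pval_ge_def)
qed

theorem chord_sum:
  "lam*X3 + mu \<noteq> 0" "pole_ge p n X3"
  "pval_ge p (3*n) (X3/(-(lam*X3+mu)) - X1/Y1 - X2/Y2)"
proof -
  show "lam*X3 + mu \<noteq> 0" "pole_ge p n X3" using third_nonzero third_pole by blast+
  have "X3/(-(lam*X3+mu)) = - (X3/(lam*X3+mu))" by (rule divide_minus_right)
  then have e: "X3/(-(lam*X3+mu)) - X1/Y1 - X2/Y2 = - (X1/Y1 + X2/Y2 + X3/(lam*X3 + mu))" by simp
  show "pval_ge p (3*n) (X3/(-(lam*X3+mu)) - X1/Y1 - X2/Y2)"
    unfolding e by (rule pval_ge_uminus[OF p params_sum_pval])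
qed

end

text \<open>\<open>(X, Y) = (d x, d^2 y)\<close> maps \<open>E_d\<close> to an integral Weierstrass model; chords map to chords.\<close>

lemma weierstrass_model:
  assumes "of_int d * y^2 = ec_rhs x"
  shows "(of_int d^2 * y)^2 = (of_int d * x)^3 + of_int (5*d) * (of_int d * x)^2
           + of_int (-152*d^2) * (of_int d * x) + of_int (-624*d^3)"
proof -
  have "(of_int d^2 * y)^2 = (of_int d)^3 * (of_int d * y^2)"
    by (simp add: power2_eq_square power3_eq_cube algebra_simps)
  also have "\<dots> = (of_int d)^3 * ec_rhs x" using assms by simp
  finally show ?thesis by (simp add: ec_rhs_expand algebra_simps power2_eq_square power3_eq_cube)
qed

lemma chord_roots_weierstrass:
  fixes d :: int
  defines "D \<equiv> of_int d :: rat"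
  assumes L: "chord_roots d s m x1 x2 x3"
  shows "D*x1 + D*x2 + D*x3 = (D*s)^2 - of_int (5*d)"
    and "(D*x1)*(D*x2) + (D*x1)*(D*x3) + (D*x2)*(D*x3) = of_int (-152*d^2) - 2*(D*s)*(D^2*m)"
    and "(D*x1)*(D*x2)*(D*x3) = (D^2*m)^2 - of_int (-624*d^3)"
proof -
  have L1: "D*s^2 - 5 = x1 + x2 + x3" and L2: "2*D*s*m + 152 = -(x1*x2 + x1*x3 + x2*x3)"
    and L3: "D*m^2 + 624 = x1*x2*x3" using L by (auto simp: chord_roots_def D_def)
  have "D*x1 + D*x2 + D*x3 = D*(D*s^2 - 5)" unfolding L1 by (simp add: algebra_simps)
  then show "D*x1 + D*x2 + D*x3 = (D*s)^2 - of_int (5*d)"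
    by (simp add: D_def algebra_simps power2_eq_square)
  have "(D*x1)*(D*x2) + (D*x1)*(D*x3) + (D*x2)*(D*x3) = D^2*(x1*x2 + x1*x3 + x2*x3)"
    by (simp add: algebra_simps power2_eq_square)
  also have "\<dots> = D^2*(-(2*D*s*m + 152))" using L2 by simp
  finally show "(D*x1)*(D*x2) + (D*x1)*(D*x3) + (D*x2)*(D*x3) = of_int (-152*d^2) - 2*(D*s)*(D^2*m)"
    by (simp add: D_def algebra_simps power2_eq_square)
  have "(D*x1)*(D*x2)*(D*x3) = D^3*(D*m^2 + 624)" unfolding L3 by (simp add: algebra_simps power3_eq_cube)
  then show "(D*x1)*(D*x2)*(D*x3) = (D^2*m)^2 - of_int (-624*d^3)"
    by (simp add: D_def algebra_simps power2_eq_square power3_eq_cube)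
qed

definition formal_param :: "int \<Rightarrow> (rat \<times> rat) option \<Rightarrow> rat" where
  "formal_param d P = (case P of None \<Rightarrow> 0 | Some (x, y) \<Rightarrow> (of_int d * x) / (of_int d^2 * y))"

lemma formal_param_None [simp]: "formal_param d None = 0"
  by (simp add: formal_param_def)

definition ec_filtration :: "int \<Rightarrow> int \<Rightarrow> int \<Rightarrow> (rat \<times> rat) option \<Rightarrow> bool" where
  "ec_filtration p d n P \<longleftrightarrow> (case P of None \<Rightarrow> True | Some (x, y) \<Rightarrow> pole_ge p n (of_int d * x))"

lemma formal_chord_of_chord_roots:
  fixes d :: int
  defines "D \<equiv> of_int d :: rat"
  assumes p: "prime p" and d: "d \<noteq> 0" and n: "n \<ge> 1"
    and c1: "D * y1^2 = ec_rhs x1" and c2: "D * y2^2 = ec_rhs x2"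
    and P1: "pole_ge p n (D * x1)" and P2: "pole_ge p n (D * x2)"
    and l: "y1 = s*x1+m" "y2 = s*x2+m" and L: "chord_roots d s m x1 x2 x3"
  shows "formal_chord p (of_int (5*d)) (of_int (-152*d^2)) (of_int (-624*d^3)) n
           (D*x1) (D^2*y1) (D*x2) (D^2*y2) (D*x3) (D*s) (D^2*m)"
proof -
  have tangent: "D^2*y1 = D^2*y2 \<and>
      2*(D*s)*(D^2*y1) = 3*(D*x1)^2 + 2*of_int (5*d)*(D*x1) + of_int (-152*d^2)"
    if "D*x1 = D*x2"
  proof -
    have x: "x1 = x2" using that d by (simp add: D_def)
    have "ec_rhs_deriv x1 = 2 * D * s * y1" using chord_roots_tangent[of d s m x1 x3] L x l
      by (simp add: D_def)
    then have "2*(D*s)*(D^2*y1) = D^2 * ec_rhs_deriv x1" by (simp add: algebra_simps power2_eq_square)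
    then show ?thesis using x l by (simp add: D_def ec_rhs_deriv_def algebra_simps power2_eq_square)
  qed
  have c3: "D * (s*x3+m)^2 = ec_rhs x3" using chord_roots_on_curve[OF L] by (simp add: D_def)
  have w3: "((D*s)*(D*x3) + D^2*m)^2 = (D*x3)^3 + of_int (5*d)*(D*x3)^2
      + of_int (-152*d^2)*(D*x3) + of_int (-624*d^3)"
    using weierstrass_model[OF c3[unfolded D_def]] by (simp add: D_def algebra_simps power2_eq_square)
  have ll: "D^2*y1 = (D*s)*(D*x1) + D^2*m" "D^2*y2 = (D*s)*(D*x2) + D^2*m"
    using l by (simp_all add: algebra_simps power2_eq_square)
  show ?thesis
    by unfold_locales
      (fact p n P1 P2 tangent pval_ge_of_int[OF p] weierstrass_model[OF c1[unfolded D_def], folded D_def]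
        weierstrass_model[OF c2[unfolded D_def], folded D_def] w3 ll
        chord_roots_weierstrass[OF L, folded D_def])+
qed

lemma ec_add_filtration:
  assumes p: "prime p" and d: "d \<noteq> 0" and n: "n \<ge> 1"
    and c1: "of_int d * y1^2 = ec_rhs x1" and c2: "of_int d * y2^2 = ec_rhs x2"
    and P1: "pole_ge p n (of_int d * x1)" and P2: "pole_ge p n (of_int d * x2)"
    and ni: "\<not> (x1 = x2 \<and> y1 = -y2)"
  obtains x3 y3 where "ec_add d (Some (x1,y1)) (Some (x2,y2)) = Some (x3,y3)"
    "pole_ge p n (of_int d * x3)"
    "pval_ge p (3*n) (formal_param d (Some (x3,y3)) - formal_param d (Some (x1,y1))
                        - formal_param d (Some (x2,y2)))"
proof -
  let ?D = "of_int d :: rat"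
  obtain s m x3 where l: "y1 = s*x1+m" "y2 = s*x2+m" and L: "chord_roots d s m x1 x2 x3"
    using chord_roots_exists[OF d c1 c2 ni] .
  note S = formal_chord.chord_sum[OF formal_chord_of_chord_roots[OF p d n c1 c2 P1 P2 l L]]
  have "?D^2 * (-(s*x3+m)) = -((?D*s)*(?D*x3) + ?D^2*m)" by (simp add: algebra_simps power2_eq_square)
  then have t3: "formal_param d (Some (x3, -(s*x3+m))) = (?D*x3)/(-((?D*s)*(?D*x3) + ?D^2*m))"
    by (simp add: formal_param_def)
  have t12: "formal_param d (Some (x1,y1)) = (?D*x1)/(?D^2*y1)"
    "formal_param d (Some (x2,y2)) = (?D*x2)/(?D^2*y2)" by (simp_all add: formal_param_def)
  show ?thesis
  proof (rule that)
    show "ec_add d (Some (x1,y1)) (Some (x2,y2)) = Some (x3, -(s*x3+m))"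
      using ec_add_chord[OF d c1 l L] .
    show "pole_ge p n (?D*x3)" using S(2) .
    show "pval_ge p (3*n) (formal_param d (Some (x3, -(s*x3+m))) - formal_param d (Some (x1,y1))
        - formal_param d (Some (x2,y2)))"
      unfolding t3 t12 using S(3) .
  qed
qed

lemma ec_mul_filtration:
  assumes p: "prime p" and d: "d \<noteq> 0" and n: "n \<ge> 1"
    and c: "of_int d * y^2 = ec_rhs x" and P: "pole_ge p n (of_int d * x)"
  shows "ec_filtration p d n (ec_mul d j (Some (x,y))) \<and>
         pval_ge p (3*n) (formal_param d (ec_mul d j (Some (x,y))) - of_nat j * formal_param d (Some (x,y)))"
proof (induction j)
  case 0
  then show ?case by (simp add: ec_filtration_def formal_param_def)
next
  case (Suc j)
  let ?R = "Some (x,y)" and ?t = "formal_param d"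
  have on: "on_curve d (ec_mul d j ?R)" using on_curve_ec_mul[OF d] c by (simp add: on_curve_def)
  show ?case
  proof (cases "ec_mul d j ?R")
    case None
    then show ?thesis using Suc P by (simp add: ec_filtration_def algebra_simps)
  next
    case (Some Q)
    then obtain x' y' where Q: "ec_mul d j ?R = Some (x',y')" by (cases Q) auto
    have c': "of_int d * y'^2 = ec_rhs x'" using on Q by (simp add: on_curve_def)
    have P': "pole_ge p n (of_int d * x')" using Suc Q by (simp add: ec_filtration_def)
    have ih: "pval_ge p (3*n) (?t (Some (x',y')) - of_nat j * ?t ?R)" using Suc Q by simp
    show ?thesis
    proof (cases "x = x' \<and> y = -y'")
      case True
      then have "?t (Some (x',y')) = - ?t ?R" by (simp add: formal_param_def)
      then show ?thesis using ih pval_ge_uminus[OF p] Q True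
        by (simp add: ec_filtration_def algebra_simps)
    next
      case False
      obtain x3 y3 where a: "ec_add d ?R (Some (x',y')) = Some (x3,y3)"
        and P3: "pole_ge p n (of_int d * x3)"
        and v3: "pval_ge p (3*n) (?t (Some (x3,y3)) - ?t ?R - ?t (Some (x',y')))"
        using ec_add_filtration[OF p d n c c' P P' False] .
      have "pval_ge p (3*n) ((?t (Some (x3,y3)) - ?t ?R - ?t (Some (x',y')))
          + (?t (Some (x',y')) - of_nat j * ?t ?R))"
        using pval_ge_add[OF p v3 ih] .
      then show ?thesis using a Q P3 by (simp add: ec_filtration_def algebra_simps)
    qed
  qed
qed

text \<open>If \<open>d x\<close> had a pole at \<open>p\<close>, of order \<open>2k\<close>, then \<open>t = formal_param d P\<close> would satisfy
  \<open>v(t) = k\<close> and \<open>l t \<equiv> t(l P) = 0\<close> modulo \<open>p^(3k)\<close>, forcing \<open>v(l) \<ge> 2k \<ge> 2\<close>.\<close>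

theorem pval_ge_prime_order:
  assumes p: "prime p" and d: "d \<noteq> 0" and c: "of_int d * y^2 = ec_rhs x"
    and l: "prime (l::nat)" and o: "ec_mul d l (Some (x,y)) = None"
  shows "pval_ge p 0 (of_int d * x)"
proof (rule ccontr)
  assume "\<not> pval_ge p 0 (of_int d * x)"
  then have X: "of_int d * x \<noteq> 0" "pval p (of_int d * x) < 0" by (auto simp: pval_ge_def)
  have "integral_cubic p (of_int (5*d)) (of_int (-152*d^2)) (of_int (-624*d^3))"
    by unfold_locales (fact p pval_ge_of_int[OF p])+
  then obtain k where Y: "of_int d^2 * y \<noteq> 0" and k: "k \<ge> 1" "pval p (of_int d * x) = -2*k"
      "pval p (of_int d^2 * y) = -3*k"
    using integral_cubic.pole_pvals[OF _ weierstrass_model[OF c] X] by blast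
  have "pole_ge p k (of_int d * x)" using X k by (simp add: pole_ge_def)
  then have "pval_ge p (3*k) (- (of_nat l * formal_param d (Some (x,y))))"
    using ec_mul_filtration[OF p d k(1) c, of l] o by simp
  then have "pval_ge p (3*k) (of_nat l * formal_param d (Some (x,y)))"
    using pval_ge_uminus[OF p] by fastforce
  moreover have t: "formal_param d (Some (x,y)) \<noteq> 0" "pval p (formal_param d (Some (x,y))) = k"
    using X Y k pval_divide[OF p X(1) Y] by (simp_all add: formal_param_def)
  moreover have l0: "(of_nat l :: rat) \<noteq> 0" using l by (simp add: prime_gt_0_nat)
  ultimately have "3*k \<le> pval p (of_int (int l)) + k"
    using pval_mult[OF p l0 t(1)] by (simp add: pval_ge_def)
  moreover have "pval p (of_int (int l)) \<le> 1" by (rule pval_prime_le_1[OF p]) (use l in simp)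
  ultimately show False using k by linarith
qed

corollary Ints_prime_order:
  assumes d: "d \<noteq> 0" and c: "of_int d * y^2 = ec_rhs x"
    and l: "prime (l::nat)" and o: "ec_mul d l (Some (x,y)) = None"
  shows "of_int d * x \<in> \<int>"
  using pval_ge_prime_order[OF _ d c l o] by (rule Ints_of_pval_ge)

section \<open>Points of odd order\<close>

lemma squarefree_square_dvd_imp_dvd:
  fixes g q d :: int
  assumes sq: "squarefree d" and dv: "g^2 dvd q^2 * d"
  shows "g dvd q"
proof (cases "g = 0 \<and> q = 0")
  case False
  define h where "h = gcd g q"
  define g' q' where "g' = g div h" and "q' = q div h"
  have h: "h \<noteq> 0" using False by (simp add: h_def)
  have gq: "g = h * g'" "q = h * q'" by (simp_all add: h_def g'_def q'_def)
  have cop: "coprime g' q'" using False div_gcd_coprime[of g q] by (auto simp: g'_def q'_def h_def)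
  have "h^2 * g'^2 dvd h^2 * (q'^2 * d)" using dv gq by (simp add: power_mult_distrib ac_simps)
  then have "g'^2 dvd q'^2 * d" using h by simp
  moreover have "coprime (g'^2) (q'^2)" using cop by simp
  ultimately have "g'^2 dvd d" by (simp add: coprime_dvd_mult_right_iff)
  then have "is_unit g'" using sq unfolding squarefree_def by blast
  then show ?thesis using gq by (simp add: mult_dvd_mono unit_imp_dvd)
qed auto

lemma dvd_square_mult_square:
  fixes a b c m k :: int
  assumes "a dvd b^2 * c^2" "gcd a b dvd m" "gcd a c dvd k"
  shows "a dvd m^2 * k^2"
proof -
  obtain u v where uv: "a = u * v" "u dvd b^2" "v dvd c^2" using dvd_productE[OF assms(1)] by blast
  have "u dvd gcd (a^2) (b^2)" using uv by (simp add: power2_eq_square)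
  then have "u dvd (gcd a b)^2" by simp
  also have "\<dots> dvd m^2" using assms(2) by (simp add: dvd_power_same)
  finally have u: "u dvd m^2" .
  have "v dvd gcd (a^2) (c^2)" using uv by (simp add: power2_eq_square)
  then have "v dvd (gcd a c)^2" by simp
  also have "\<dots> dvd k^2" using assms(3) by (simp add: dvd_power_same)
  finally have v: "v dvd k^2" .
  show ?thesis using uv(1) mult_dvd_mono[OF u v] by simp
qed

lemma pos_divisor_mem:
  fixes a n :: int
  assumes "0 < a" "a dvd n" "0 < n"
  shows "a \<in> set (filter (\<lambda>b. b dvd n) [1..n])"
  using assms zdvd_imp_le[of a n] by auto

lemma diophantine_search:
  "\<forall>a1 \<in> set (filter (\<lambda>b. b dvd 225) [1..225]). \<forall>a2 \<in> set (filter (\<lambda>b. b dvd 144) [1..144]).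
   \<forall>a3 \<in> set (filter (\<lambda>b. b dvd 400) [1..400::int]).
     16*a1^2 - 25*a2^2 + 9*a3^2 = 0 \<longrightarrow> \<not> 2*a1*a2*a3 dvd a2^2*a3^2 + a1^2*a3^2 + a1^2*a2^2"
  by code_simp

lemma gcd_dvd_of_squares_diff:
  fixes a b q d :: int
  assumes "squarefree d" "a^2 - b^2 = q^2 * d"
  shows "gcd a b dvd q"
proof (rule squarefree_square_dvd_imp_dvd[OF assms(1)])
  have "(gcd a b)^2 dvd a^2" "(gcd a b)^2 dvd b^2" by (simp_all add: dvd_power_same)
  then show "(gcd a b)^2 dvd q^2 * d" unfolding assms(2)[symmetric] by (rule dvd_diff)
qed

text \<open>For a point \<open>(x, y)\<close> of odd order, \<open>b1^2, b2^2, b3^2 = d x + 13 d, d x + 4 d, d x - 12 d\<close>, and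
  \<open>b2^2 b3^2 + b1^2 b3^2 + b1^2 b2^2 = d^2 f'(x) = 2 (d^2 y) lam\<close> with \<open>d^2 y = \<plusminus>b1 b2 b3\<close> and an
  integral doubling slope \<open>lam\<close> (\<open>no_integral_odd_point\<close>).\<close>

lemma diophantine_no_solution:
  fixes a1 a2 a3 d :: int
  assumes sq: "squarefree d" and pos: "a1 > 0" "a2 > 0" "a3 > 0"
    and e1: "a1^2 - a2^2 = 3^2 * d" and e2: "a2^2 - a3^2 = 4^2 * d"
    and dv: "2*a1*a2*a3 dvd a2^2*a3^2 + a1^2*a3^2 + a1^2*a2^2"
  shows False
proof -
  have e3: "a1^2 - a3^2 = 5^2 * d" using e1 e2 by simp
  have g: "gcd a1 a2 dvd 3" "gcd a2 a3 dvd 4" "gcd a1 a3 dvd 5"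
    using gcd_dvd_of_squares_diff[OF sq] e1 e2 e3 by blast+
  have "a1 dvd a2^2*a3^2 + a1^2*a3^2 + a1^2*a2^2" "a2 dvd a2^2*a3^2 + a1^2*a3^2 + a1^2*a2^2"
    "a3 dvd a2^2*a3^2 + a1^2*a3^2 + a1^2*a2^2"
    using dvd_trans[OF _ dv] by (simp_all add: dvd_mult2 dvd_mult)
  then have "a1 dvd a2^2*a3^2" "a2 dvd a1^2*a3^2" "a3 dvd a1^2*a2^2"
    by (simp_all add: power2_eq_square dvd_add_right_iff dvd_add_left_iff add.assoc)
  then have "a1 dvd 3^2*5^2" "a2 dvd 3^2*4^2" "a3 dvd 5^2*4^2"
    using dvd_square_mult_square g by (metis gcd.commute)+
  then have "a1 \<in> set (filter (\<lambda>b. b dvd 225) [1..225])" "a2 \<in> set (filter (\<lambda>b. b dvd 144) [1..144])"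
    "a3 \<in> set (filter (\<lambda>b. b dvd 400) [1..400])"
    using pos_divisor_mem pos by simp_all
  moreover have "16*a1^2 - 25*a2^2 + 9*a3^2 = 0" using e1 e2 by simp
  ultimately show False using diophantine_search dv by blast
qed

lemma rat_square_of_int:
  fixes r :: rat
  assumes "of_int n = r^2"
  obtains b where "r = of_int b" "n = b^2"
proof -
  have "r^2 \<in> \<int>" unfolding assms[symmetric] by simp
  then have "r \<in> \<int>" by (rule Ints_of_square_Ints)
  then obtain b where b: "r = of_int b" by (cases rule: Ints_cases)
  have "(of_int n :: rat) = of_int (b^2)" using assms b by simp
  then have "n = b^2" by (simp only: of_int_eq_iff)
  then show ?thesis using that b by blast
qed

lemma doubling_sub_root_square:
  assumes d: "d \<noteq> 0" and ch: "of_int d * yh^2 = ec_rhs xh" and yh: "yh \<noteq> 0"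
    and a: "ec_add d (Some (xh,yh)) (Some (xh,yh)) = Some (x,y)" and e: "ec_rhs e = 0"
  obtains r where "of_int d * (x - e) = r^2"
proof -
  obtain s m x3 where l: "yh = s*xh+m" and L: "chord_roots d s m xh xh x3"
    using chord_roots_exists[OF d ch ch] yh by auto
  have "x3 = x" using ec_add_chord[OF d ch l l L] a by simp
  then have pe: "of_int d * (s*e+m)^2 = (xh - e)^2 * (x - e)"
    using chord_roots_factor[OF L, of e] e by (simp add: power2_eq_square algebra_simps)
  have xe: "xh \<noteq> e" using ch e yh d by auto
  have "(of_int d * (s*e+m) / (xh - e))^2 = of_int d * (of_int d * (s*e+m)^2) / (xh - e)^2"
    by (simp add: power2_eq_square)
  also have "\<dots> = of_int d * (x - e)" unfolding pe using xe by simp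
  finally show ?thesis using that by metis
qed

lemma doubling_slope_square:
  assumes d: "d \<noteq> 0" and y: "y \<noteq> 0"
    and a: "ec_add d (Some (x,y)) (Some (x,y)) = Some (x2,y2)"
  shows "(ec_rhs_deriv x / (2*y))^2 = of_int d * x2 + 5 * of_int d + 2 * (of_int d * x)"
proof -
  define l where "l = (3 * x^2 + 10 * x - 152) / (2 * of_int d * y)"
  have x2: "x2 = of_int d * l^2 - 5 - x - x" using a y unfolding l_def by (simp add: Let_def)
  have "ec_rhs_deriv x / (2*y) = of_int d * l" unfolding l_def ec_rhs_deriv_def using d by simp
  then have "(ec_rhs_deriv x / (2*y))^2 = of_int d * (of_int d * l^2)"
    by (simp add: power2_eq_square algebra_simps)
  also have "\<dots> = of_int d * (x2 + 5 + 2*x)" using x2 by simp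
  finally show ?thesis by (simp add: algebra_simps)
qed

lemma (in group) odd_order_square_root:
  fixes l :: nat
  assumes x: "x \<in> carrier G" and l: "x [^] l = \<one>" "odd l"
  shows "x [^] ((l + 1) div 2) \<otimes> x [^] ((l + 1) div 2) = x"
proof -
  obtain k where k: "l = 2*k + 1" using l(2) oddE by blast
  have "(l + 1) div 2 = k + 1" using k by simp
  then have "x [^] ((l + 1) div 2) \<otimes> x [^] ((l + 1) div 2) = x [^] ((k + 1) + (k + 1))"
    by (simp only: nat_pow_mult[OF x])
  also have "\<dots> = x [^] (Suc l)" by (rule arg_cong[where f = "\<lambda>n. x [^] n"]) (use k in simp)
  also have "\<dots> = x" using x l(1) by simp
  finally show ?thesis .
qed

lemma odd_point_integral_squares:
  assumes X: "of_int d * x = of_int X"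
    and sqs: "\<And>e. ec_rhs e = 0 \<Longrightarrow> \<exists>r. of_int d * (x - e) = r^2"
  obtains b1 b2 b3 where "b1^2 = X + 13*d" "b2^2 = X + 4*d" "b3^2 = X - 12*d"
proof -
  have h: "\<exists>b. b^2 = X - e*d" if e: "ec_rhs (of_int e) = 0" for e
  proof -
    obtain r where "of_int d * (x - of_int e) = r^2" using sqs[OF e] by blast
    then have "of_int (X - e*d) = r^2" using X by (simp add: algebra_simps)
    then obtain b where "X - e*d = b^2" by (rule rat_square_of_int)
    then show ?thesis by auto
  qed
  have "\<exists>b. b^2 = X + 13*d" "\<exists>b. b^2 = X + 4*d" "\<exists>b. b^2 = X - 12*d"
    using h[of "-13"] h[of "-4"] h[of 12] by (simp_all add: ec_rhs_def)
  then show ?thesis using that by blast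
qed

lemma odd_point_identities:
  fixes d X b1 b2 b3 :: int
  defines "D \<equiv> of_int d :: rat"
  assumes c: "D * y^2 = ec_rhs x" and y: "y \<noteq> 0" and X: "D * x = of_int X"
    and b: "b1^2 = X + 13*d" "b2^2 = X + 4*d" "b3^2 = X - 12*d"
  shows "(D^2 * y)^2 = of_int (b1*b2*b3)^2"
    and "2 * (D^2 * y) * (ec_rhs_deriv x / (2*y)) = of_int (b2^2*b3^2 + b1^2*b3^2 + b1^2*b2^2)"
proof -
  have f: "D*x + 13*D = of_int (b1^2)" "D*x + 4*D = of_int (b2^2)" "D*x - 12*D = of_int (b3^2)"
    using X b by (simp_all add: D_def)
  have "(D^2 * y)^2 = D^3 * (D * y^2)" by (simp add: power2_eq_square power3_eq_cube algebra_simps)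
  also have "\<dots> = (D*x + 13*D) * (D*x + 4*D) * (D*x - 12*D)"
    unfolding c by (simp add: ec_rhs_def power3_eq_cube algebra_simps)
  finally show "(D^2 * y)^2 = of_int (b1*b2*b3)^2" unfolding f by (simp add: power_mult_distrib)
  have "2 * (D^2 * y) * (ec_rhs_deriv x / (2*y)) = D^2 * ec_rhs_deriv x"
    using y by (simp add: field_simps power2_eq_square)
  also have "\<dots> = (D*x + 4*D)*(D*x - 12*D) + (D*x + 13*D)*(D*x - 12*D) + (D*x + 13*D)*(D*x + 4*D)"
    by (simp add: ec_rhs_deriv_def power2_eq_square algebra_simps)
  finally show "2 * (D^2 * y) * (ec_rhs_deriv x / (2*y)) = of_int (b2^2*b3^2 + b1^2*b3^2 + b1^2*b2^2)"
    unfolding f by simp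
qed

lemma no_integral_odd_point:
  assumes sq: "squarefree d" and c: "of_int d * y^2 = ec_rhs x" and y: "y \<noteq> 0"
    and a: "ec_add d (Some (x,y)) (Some (x,y)) = Some (x2,y2)"
    and XI: "of_int d * x \<in> \<int>" and X2I: "of_int d * x2 \<in> \<int>"
    and sqs: "\<And>e. ec_rhs e = 0 \<Longrightarrow> \<exists>r. of_int d * (x - e) = r^2"
  shows False
proof -
  let ?D = "of_int d :: rat"
  have d: "d \<noteq> 0" using sq by auto
  obtain X where X: "?D * x = of_int X" using XI by (auto elim: Ints_cases)
  obtain X2 where X2: "?D * x2 = of_int X2" using X2I by (auto elim: Ints_cases)
  obtain b1 b2 b3 where b: "b1^2 = X + 13*d" "b2^2 = X + 4*d" "b3^2 = X - 12*d"
    using odd_point_integral_squares[OF X sqs] .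
  note ids = odd_point_identities[OF c y X b]
  have "of_int (X2 + 5*d + 2*X) = (ec_rhs_deriv x / (2*y))^2"
    using doubling_slope_square[OF d y a] X X2 by simp
  then obtain L where L: "ec_rhs_deriv x / (2*y) = of_int L" by (rule rat_square_of_int)
  have "?D^2 * y = of_int (b1*b2*b3) \<or> ?D^2 * y = - of_int (b1*b2*b3)"
    using ids(1) by (simp add: power2_eq_iff)
  then obtain sg :: int where sg: "?D^2 * y = of_int (sg * (b1*b2*b3))" "sg = 1 \<or> sg = -1"
  proof (elim disjE)
    assume "?D^2 * y = - of_int (b1*b2*b3)"
    then show thesis using that[of "-1"] by simp
  qed (use that[of 1] in simp)
  have "of_int (2 * (sg * (b1*b2*b3)) * L) = (of_int (b2^2*b3^2 + b1^2*b3^2 + b1^2*b2^2) :: rat)"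
    using ids(2) sg(1) L by simp
  then have S: "2 * (sg * (b1*b2*b3)) * L = b2^2*b3^2 + b1^2*b3^2 + b1^2*b2^2"
    by (simp only: of_int_eq_iff)
  have "b1*b2*b3 \<noteq> 0" using sg(1) d y by auto
  then have pos: "\<bar>b1\<bar> > 0" "\<bar>b2\<bar> > 0" "\<bar>b3\<bar> > 0" by auto
  have "2 * (b1*b2*b3) dvd b2^2*b3^2 + b1^2*b3^2 + b1^2*b2^2"
    unfolding S[symmetric] using sg(2) by auto
  then have "\<bar>2 * (b1*b2*b3)\<bar> dvd b2^2*b3^2 + b1^2*b3^2 + b1^2*b2^2"
    by (simp only: abs_dvd_iff)
  moreover have "\<bar>2 * (b1*b2*b3)\<bar> = 2 * \<bar>b1\<bar> * \<bar>b2\<bar> * \<bar>b3\<bar>" by (simp add: abs_mult)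
  ultimately have "2 * \<bar>b1\<bar> * \<bar>b2\<bar> * \<bar>b3\<bar> dvd \<bar>b2\<bar>^2*\<bar>b3\<bar>^2 + \<bar>b1\<bar>^2*\<bar>b3\<bar>^2 + \<bar>b1\<bar>^2*\<bar>b2\<bar>^2"
    by (simp only: power2_abs)
  moreover have "\<bar>b1\<bar>^2 - \<bar>b2\<bar>^2 = 3^2 * d" "\<bar>b2\<bar>^2 - \<bar>b3\<bar>^2 = 4^2 * d" using b by simp_all
  ultimately show False using diophantine_no_solution[OF sq pos] by blast
qed

theorem no_odd_prime_order:
  assumes sq: "squarefree d" and c: "of_int d * y^2 = ec_rhs x" and y: "y \<noteq> 0"
    and l: "prime (l::nat)" "odd l" and o: "ec_mul d l (Some (x,y)) = None"
  shows False
proof -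
  let ?G = "ec_group d"
  have d: "d \<noteq> 0" using sq by auto
  interpret G: comm_group ?G by (rule comm_group_ec_group[OF d])
  define R where "R = Some (x,y)"
  have RG: "R \<in> carrier ?G" using c by (simp add: R_def on_curve_def)
  have Rl: "R [^]\<^bsub>?G\<^esub> l = \<one>\<^bsub>?G\<^esub>" using o ec_mul_eq_pow[OF d, of R l] RG by (simp add: R_def)
  obtain x2 y2 where R2: "ec_add d R R = Some (x2,y2)"
    using ec_add_eq_None[of d R R] y by (cases "ec_add d R R") (auto simp: R_def)
  have "(R \<otimes>\<^bsub>?G\<^esub> R) [^]\<^bsub>?G\<^esub> l = None"
    using Rl G.pow_mult_distrib[OF _ RG RG, of l] RG by simp
  then have o2: "ec_mul d l (Some (x2,y2)) = None"
    using ec_mul_eq_pow[OF d] G.m_closed[OF RG RG] R2 by simp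
  have c2: "of_int d * y2^2 = ec_rhs x2" using G.m_closed[OF RG RG] R2 by (simp add: on_curve_def)
  define H where "H = R [^]\<^bsub>?G\<^esub> ((l + 1) div 2)"
  have HH: "ec_add d H H = R" using G.odd_order_square_root[OF RG Rl l(2)] by (simp add: H_def)
  then obtain xh yh where Hxy: "H = Some (xh,yh)" by (cases H) (auto simp: R_def)
  have "H \<in> carrier ?G" unfolding H_def using RG by (rule G.nat_pow_closed)
  then have ch: "of_int d * yh^2 = ec_rhs xh" using Hxy by (simp add: on_curve_def)
  have yh: "yh \<noteq> 0" using HH Hxy by (auto simp: R_def)
  show False
  proof (rule no_integral_odd_point[OF sq c y R2[unfolded R_def]])
    show "of_int d * x \<in> \<int>" using Ints_prime_order[OF d c l(1) o] .
    show "of_int d * x2 \<in> \<int>" using Ints_prime_order[OF d c2 l(1) o2] .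
    show "\<exists>r. of_int d * (x - e) = r^2" if "ec_rhs e = 0" for e
      using doubling_sub_root_square[OF d ch yh _ that] HH Hxy by (auto simp: R_def)
  qed
qed

section \<open>Points of order a power of two\<close>

lemma ec_add_self_eq_None:
  assumes P: "on_curve d P" and a: "ec_add d P P = None"
  shows "P = None \<or> (\<exists>e. P = Some (e, 0) \<and> ec_rhs e = 0)"
proof (cases P)
  case (Some Q)
  then obtain x y where Pxy: "P = Some (x,y)" by (cases Q) auto
  then have "y = 0" using ec_add_eq_None[OF a] by simp
  then show ?thesis using P Pxy by (simp add: on_curve_def)
qed simp

lemma squarefree_times_square_eq:
  fixes d s k :: int and y :: rat
  assumes sq: "squarefree d" and e: "of_int d * y^2 = of_int (s * k^2)"
    and s: "s \<in> {1, -1}" and k: "k \<noteq> 0"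
  shows "d = s" and "y = of_int k \<or> y = - of_int k"
proof -
  have y: "y \<noteq> 0" using e k s by auto
  have "of_int (s * d) = (of_int k / y)^2"
    using e y s by (auto simp: field_simps power2_eq_square)
  then obtain b where b: "s * d = b^2" by (rule rat_square_of_int)
  have "squarefree (s * d)" using sq s by auto
  then have "is_unit b" using b unfolding squarefree_def by simp
  then have "\<bar>b\<bar> = 1" by (simp add: zdvd1_eq)
  then have "b^2 = 1" using power2_abs[of b] by simp
  then show d: "d = s" using b s by auto
  have "y^2 = (of_int k)^2" using e s unfolding d by auto
  then show "y = of_int k \<or> y = - of_int k" by (simp add: power2_eq_iff)
qed

lemma doubling_eq_two_torsion:
  assumes d: "d \<noteq> 0" and c: "of_int d * y^2 = ec_rhs x"
    and a: "ec_add d (Some (x,y)) (Some (x,y)) = Some (e, 0)"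
  shows "ec_rhs e = 0" and "(x - e)^2 = ec_rhs_deriv e"
proof -
  let ?D = "of_int d :: rat"
  have "y \<noteq> 0"
  proof
    assume "y = 0"
    then show False using a by simp
  qed
  then obtain s m x3 where l: "y = s*x+m" and L: "chord_roots d s m x x x3"
    using chord_roots_exists[OF d c c] by auto
  have "Some (x3, -(s*x3+m)) = Some (e, 0)" using a unfolding ec_add_chord[OF d c l l L] .
  then have "x3 = e" and me: "s*e + m = 0" by auto
  then show "ec_rhs e = 0" using chord_roots_on_curve[OF L] by simp
  have L1: "?D*s^2 - 5 = x + x + e" and L2: "2*?D*s*m + 152 = -(x*x + x*e + x*e)"
    using L \<open>x3 = e\<close> by (auto simp: chord_roots_def)
  have m: "m = -s*e" using me by simp
  have "2*?D*s*m = -2*e*(?D*s^2)" unfolding m by (simp add: power2_eq_square algebra_simps)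
  also have "\<dots> = -2*e*(5 + 2*x + e)" using L1 by simp
  finally have h: "-2*e*(5 + 2*x + e) + 152 = -(x*x + x*e + x*e)" using L2 by (simp only:)
  have "(x - e)^2 - ec_rhs_deriv e = (-2*e*(5 + 2*x + e) + 152) - (-(x*x + x*e + x*e))"
    by (simp add: ec_rhs_deriv_def algebra_simps power2_eq_square)
  then show "(x - e)^2 = ec_rhs_deriv e" unfolding h by simp
qed

definition order4_points :: "int \<Rightarrow> (rat \<times> rat) option set" where
  "order4_points d =
     (if d = 1 then {Some (-8, 20), Some (-8, -20), Some (32, 180), Some (32, -180)}
      else if d = -1 then {Some (2, 30), Some (2, -30), Some (-28, 120), Some (-28, -120)}
      else {})"

lemma order4_points_of_doubling:
  assumes sq: "squarefree d" and c: "of_int d * y^2 = ec_rhs x"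
    and a: "ec_add d (Some (x,y)) (Some (x,y)) = Some (e, 0)"
  shows "Some (x,y) \<in> order4_points d"
proof -
  have d: "d \<noteq> 0" using sq by auto
  note e = doubling_eq_two_torsion[OF d c a]
  have pt: "Some (x,y) \<in> order4_points d"
    if "ec_rhs x = of_int (s * k^2)" "s \<in> {1, -1}" "k \<noteq> 0"
      "{Some (x, of_int k), Some (x, - of_int k)} \<subseteq> order4_points s"
    for s k
  proof -
    have "of_int d * y^2 = of_int (s * k^2)" using c that(1) by simp
    note q = squarefree_times_square_eq[OF sq this that(2,3)]
    then show ?thesis using that(4) by auto
  qed
  consider "x = 2" | "x = -28" | "x = 32" | "x = -8"
  proof -
    have "(x + 4)^2 \<noteq> -144" using zero_le_power2[of "x + 4"] by linarith
    moreover have "e = -13 \<or> e = -4 \<or> e = 12" using e(1) ec_rhs_eq_0_iff by blast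
    ultimately have "(x + 13)^2 = 15^2 \<or> (x - 12)^2 = 20^2"
      using e(2) by (auto simp: ec_rhs_deriv_def)
    then have "x + 13 = 15 \<or> x + 13 = -15 \<or> x - 12 = 20 \<or> x - 12 = -20"
      by (simp only: power2_eq_iff disj_assoc)
    then show thesis using that by auto
  qed
  then show ?thesis
  proof cases
    case 1 then show ?thesis by (intro pt[of "-1" 30]) (simp_all add: ec_rhs_def order4_points_def)
  next
    case 2 then show ?thesis by (intro pt[of "-1" 120]) (simp_all add: ec_rhs_def order4_points_def)
  next
    case 3 then show ?thesis by (intro pt[of 1 180]) (simp_all add: ec_rhs_def order4_points_def)
  next
    case 4 then show ?thesis by (intro pt[of 1 20]) (simp_all add: ec_rhs_def order4_points_def)
  qed
qed

lemma square_eq_5_mult_imp_5_dvd: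
  fixes b m :: int
  assumes "b^2 = 5 * m" shows "5 dvd m"
proof -
  have "(5::int) dvd b^2" using assms by simp
  then have "5 dvd b" using prime_dvd_power[of "5::int" b 2] by simp
  then obtain c where "b = 5 * c" by blast
  then have "m = 5 * c^2" using assms by (simp add: power2_eq_square)
  then show ?thesis by simp
qed

lemma order4_point_not_double:
  assumes d: "d \<noteq> 0" and cp: "of_int d * yp^2 = ec_rhs xp"
    and a: "ec_add d (Some (xp, yp)) (Some (xp, yp)) = Some (xt, yt)"
    and T4: "Some (xt, yt) \<in> order4_points d"
  shows False
proof -
  have yp: "yp \<noteq> 0"
  proof
    assume "yp = 0"
    then show False using a by simp
  qed
  have "ec_rhs (-13) = 0" by (simp add: ec_rhs_def)
  then obtain r where r: "of_int d * (xt - (-13)) = r^2"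
    using doubling_sub_root_square[OF d cp yp a] by blast
  have no: "of_int (5 * m) \<noteq> r^2" if "\<not> 5 dvd m" for m :: int
  proof
    assume "of_int (5 * m) = r^2"
    then obtain b where "5 * m = b^2" by (rule rat_square_of_int)
    then show False using square_eq_5_mult_imp_5_dvd[of b m] that by simp
  qed
  have "of_int d * (xt + 13) \<in> {of_int (5 * 1), of_int (5 * 9), of_int (5 * (-3)), of_int (5 * 3)}"
    using T4 by (auto simp: order4_points_def split: if_splits)
  then show False using r no[of 1] no[of 9] no[of "-3"] no[of 3] by auto
qed

lemma (in monoid) nat_pow_two: "x \<in> carrier G \<Longrightarrow> x [^] (2::nat) = x \<otimes> x"
  by (simp add: numeral_2_eq_2)

lemma ec_pow_8_imp_pow_4:
  assumes sq: "squarefree d" and P: "P \<in> carrier (ec_group d)"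
    and P8: "P [^]\<^bsub>ec_group d\<^esub> (8::nat) = None"
  shows "P [^]\<^bsub>ec_group d\<^esub> (4::nat) = None"
proof (rule ccontr)
  let ?G = "ec_group d"
  assume U0: "P [^]\<^bsub>?G\<^esub> (4::nat) \<noteq> None"
  have d: "d \<noteq> 0" using sq by auto
  interpret G: comm_group ?G by (rule comm_group_ec_group[OF d])
  define T where "T = P \<otimes>\<^bsub>?G\<^esub> P"
  have TG: "T \<in> carrier ?G" unfolding T_def by (rule G.m_closed[OF P P])
  have TT: "T \<otimes>\<^bsub>?G\<^esub> T = P [^]\<^bsub>?G\<^esub> (4::nat)"
    using G.nat_pow_pow[OF P, of 2 2] P TG by (simp add: T_def G.nat_pow_two)
  have "(T \<otimes>\<^bsub>?G\<^esub> T) \<otimes>\<^bsub>?G\<^esub> (T \<otimes>\<^bsub>?G\<^esub> T)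
      = (P [^]\<^bsub>?G\<^esub> (4::nat)) [^]\<^bsub>?G\<^esub> (2::nat)"
    unfolding TT using G.nat_pow_two[OF G.nat_pow_closed[OF P]] by simp
  also have "\<dots> = None" using G.nat_pow_pow[OF P, of 4 2] P8 by simp
  finally have "(T \<otimes>\<^bsub>?G\<^esub> T) \<otimes>\<^bsub>?G\<^esub> (T \<otimes>\<^bsub>?G\<^esub> T) = None" .
  then obtain e where e: "T \<otimes>\<^bsub>?G\<^esub> T = Some (e, 0)"
    using ec_add_self_eq_None[of d "T \<otimes>\<^bsub>?G\<^esub> T"] TT U0 G.m_closed[OF TG TG] by auto
  then obtain xt yt where Txy: "T = Some (xt, yt)" by (cases T) auto
  have ct: "of_int d * yt^2 = ec_rhs xt" using TG Txy by (simp add: on_curve_def)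
  have T4: "Some (xt, yt) \<in> order4_points d"
    using order4_points_of_doubling[OF sq ct] e[unfolded Txy ec_group_simps] .
  obtain xp yp where Pxy: "P = Some (xp, yp)"
  proof (cases P)
    case None
    then show ?thesis using Txy by (simp add: T_def)
  next
    case (Some Q)
    then show ?thesis using that by (cases Q) auto
  qed
  have cp: "of_int d * yp^2 = ec_rhs xp" using P Pxy by (simp add: on_curve_def)
  have "ec_add d (Some (xp, yp)) (Some (xp, yp)) = Some (xt, yt)"
    using Txy unfolding T_def Pxy ec_group_simps .
  then show False using order4_point_not_double[OF d cp _ T4] by blast
qed

lemma ec_pow_odd_prime_eq_one:
  assumes sq: "squarefree d" and Q: "Q \<in> carrier (ec_group d)"
    and l: "prime (l::nat)" "odd l" and Ql: "Q [^]\<^bsub>ec_group d\<^esub> l = None"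
  shows "Q = None"
proof (rule ccontr)
  let ?G = "ec_group d"
  assume "Q \<noteq> None"
  then obtain x y where Qxy: "Q = Some (x, y)" by (cases Q) auto
  have d: "d \<noteq> 0" using sq by auto
  interpret G: comm_group ?G by (rule comm_group_ec_group[OF d])
  have c: "of_int d * y^2 = ec_rhs x" using Q Qxy by (simp add: on_curve_def)
  show False
  proof (cases "y = 0")
    case True
    then have Q2: "Q [^]\<^bsub>?G\<^esub> (2::nat) = None" using Q Qxy by (simp add: G.nat_pow_two)
    obtain k where k: "l = 2*k + 1" using l(2) oddE by blast
    have "Q [^]\<^bsub>?G\<^esub> l = (Q [^]\<^bsub>?G\<^esub> (2::nat)) [^]\<^bsub>?G\<^esub> k \<otimes>\<^bsub>?G\<^esub> Q"
      unfolding k using G.nat_pow_pow[OF Q, of 2 k] G.nat_pow_Suc[of Q "2*k"] by simp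
    also have "\<dots> = Q" unfolding Q2 using Q G.nat_pow_one by simp
    finally show False using Ql Qxy by simp
  next
    case False
    have "ec_mul d l (Some (x, y)) = None" using Ql ec_mul_eq_pow[OF d] Q Qxy by simp
    then show False using no_odd_prime_order[OF sq c False l] by simp
  qed
qed

lemma ec_torsion_pow_4:
  fixes n :: nat
  assumes sq: "squarefree d"
  shows "P \<in> carrier (ec_group d) \<Longrightarrow> n > 0 \<Longrightarrow> P [^]\<^bsub>ec_group d\<^esub> n = None
           \<Longrightarrow> P [^]\<^bsub>ec_group d\<^esub> (4::nat) = None"
proof (induction n arbitrary: P rule: less_induct)
  case (less n P)
  let ?G = "ec_group d"
  have d: "d \<noteq> 0" using sq by auto
  interpret G: comm_group ?G by (rule comm_group_ec_group[OF d])
  have P: "P \<in> carrier ?G" using less by simp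
  show ?case
  proof (cases "even n")
    case True
    then obtain m where m: "n = 2*m" by blast
    have "(P [^]\<^bsub>?G\<^esub> (2::nat)) [^]\<^bsub>?G\<^esub> m = None"
      using less(4) G.nat_pow_pow[OF P] m by simp
    then have "(P [^]\<^bsub>?G\<^esub> (2::nat)) [^]\<^bsub>?G\<^esub> (4::nat) = None"
      using less.IH[of m] m less(3) G.nat_pow_closed[OF P] by simp
    then have "P [^]\<^bsub>?G\<^esub> (8::nat) = None" using G.nat_pow_pow[OF P, of 2 4] by simp
    then show ?thesis using ec_pow_8_imp_pow_4[OF sq P] by simp
  next
    case odd: False
    show ?thesis
    proof (cases "n = 1")
      case True
      then show ?thesis using less(4) P G.nat_pow_one by simp
    next
      case False
      obtain l where l: "prime l" "l dvd n" using prime_factor_nat[OF False] by blast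
      have "odd l" using l(2) odd by (meson dvd_trans)
      obtain m where m: "n = l * m" using l(2) by blast
      have m0: "0 < m" "m < n" using m less(3) prime_gt_1_nat[OF l(1)] by (auto intro: gr0I)
      have "(P [^]\<^bsub>?G\<^esub> m) [^]\<^bsub>?G\<^esub> l = None"
        using less(4) G.nat_pow_pow[OF P, of m l] m by (simp add: mult.commute)
      then have "P [^]\<^bsub>?G\<^esub> m = None"
        using ec_pow_odd_prime_eq_one[OF sq G.nat_pow_closed[OF P] l(1) \<open>odd l\<close>] by simp
      then show ?thesis using less.IH[OF m0(2) P m0(1)] by simp
    qed
  qed
qed

section \<open>The torsion subgroup\<close>

definition two_torsion_points :: "(rat \<times> rat) option set" where
  "two_torsion_points = {None, Some (-13, 0), Some (-4, 0), Some (12, 0)}"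

lemma ec_tors_simps [simp]:
  "carrier (ec_tors d) = {P. on_curve d P \<and> (\<exists>n>0. ec_mul d n P = None)}"
  "monoid.mult (ec_tors d) = ec_add d"
  by (simp_all add: ec_tors_def)

lemma two_torsion_points_subset: "two_torsion_points \<subseteq> carrier (ec_tors d)"
  by (auto simp: two_torsion_points_def on_curve_def ec_rhs_def numeral_2_eq_2 intro!: exI[of _ 2])

lemma order4_points_subset: "order4_points d \<subseteq> carrier (ec_tors d)"
proof -
  have "\<forall>P \<in> order4_points d. on_curve d P \<and> ec_mul d 4 P = None"
    unfolding order4_points_def by (auto; code_simp)
  then show ?thesis by (auto intro!: exI[of _ 4])
qed

lemma carrier_ec_tors:
  assumes sq: "squarefree d"
  shows "carrier (ec_tors d) = two_torsion_points \<union> order4_points d"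
proof
  let ?G = "ec_group d"
  have d: "d \<noteq> 0" using sq by auto
  interpret G: comm_group ?G by (rule comm_group_ec_group[OF d])
  show "carrier (ec_tors d) \<subseteq> two_torsion_points \<union> order4_points d"
  proof
    fix P assume "P \<in> carrier (ec_tors d)"
    then obtain n where P: "on_curve d P" and n: "n > 0" "ec_mul d n P = None" by auto
    have PG: "P \<in> carrier ?G" using P by simp
    have "P [^]\<^bsub>?G\<^esub> n = None" using n ec_mul_eq_pow[OF d P] by simp
    then have P4: "P [^]\<^bsub>?G\<^esub> (4::nat) = None" using ec_torsion_pow_4[OF sq PG n(1)] by simp
    define Q where "Q = ec_add d P P"
    have QG: "Q \<in> carrier ?G" using G.m_closed[OF PG PG] by (simp add: Q_def)
    have QP: "Q = P [^]\<^bsub>?G\<^esub> (2::nat)" using G.nat_pow_two[OF PG] by (simp add: Q_def)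
    have "ec_add d Q Q = Q [^]\<^bsub>?G\<^esub> (2::nat)" using G.nat_pow_two[OF QG] by simp
    also have "\<dots> = None" unfolding QP using G.nat_pow_pow[OF PG, of 2 2] P4 by simp
    finally have "ec_add d Q Q = None" .
    then consider "Q = None" | e where "Q = Some (e, 0)" using ec_add_self_eq_None QG by auto
    then show "P \<in> two_torsion_points \<union> order4_points d"
    proof cases
      case 1
      then show ?thesis using ec_add_self_eq_None[OF P] ec_rhs_eq_0_iff
        by (auto simp: Q_def two_torsion_points_def)
    next
      case (2 e)
      then obtain x y where Pxy: "P = Some (x, y)" by (cases P) (auto simp: Q_def)
      have "of_int d * y^2 = ec_rhs x" using P Pxy by (simp add: on_curve_def)
      from order4_points_of_doubling[OF sq this] 2 Pxy show ?thesis by (simp add: Q_def)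
    qed
  qed
  show "two_torsion_points \<union> order4_points d \<subseteq> carrier (ec_tors d)"
    using two_torsion_points_subset order4_points_subset by blast
qed

lemma is_iso_DirProd_integer_mod_groupI:
  fixes h :: "'a \<Rightarrow> int \<times> int"
  assumes cG: "carrier G = A" and fin: "finite A" and nk: "0 < n" "0 < k"
    and img: "h ` A = {0..<int n} \<times> {0..<int k}" and card: "card A = n * k"
    and hom: "\<forall>x \<in> A. \<forall>y \<in> A.
      h (x \<otimes>\<^bsub>G\<^esub> y) = ((fst (h x) + fst (h y)) mod int n, (snd (h x) + snd (h y)) mod int k)"
  shows "G \<cong> DirProd (integer_mod_group n) (integer_mod_group k)"
proof -
  have "card (h ` A) = card A" using img card nk by simp
  then have "inj_on h A" by (rule eq_card_imp_inj_on[OF fin])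
  moreover have "carrier (DirProd (integer_mod_group n) (integer_mod_group k)) = h ` A"
    using img nk by (simp add: DirProd_def carrier_integer_mod_group)
  ultimately have "h \<in> iso G (DirProd (integer_mod_group n) (integer_mod_group k))"
    using hom cG unfolding iso_def hom_def bij_betw_def by (auto simp: DirProd_def prod.case_eq_if)
  then show ?thesis unfolding is_iso_def by blast
qed

text \<open>Coordinates in \<open>\<int>/4 \<times> \<int>/2\<close> with respect to the basis \<open>(-8, 20)\<close>, \<open>(-13, 0)\<close> of
  \<open>E_1(\<rat>)_tors\<close>, resp. \<open>(2, 30)\<close>, \<open>(12, 0)\<close> of \<open>E_-1(\<rat>)_tors\<close>, and in \<open>\<int>/2 \<times> \<int>/2\<close> with respect
  to \<open>(-13, 0)\<close>, \<open>(-4, 0)\<close>.\<close>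

definition tors_coords_1 :: "(rat \<times> rat) option \<Rightarrow> int \<times> int" where
  "tors_coords_1 P =
     (if P = Some (-13, 0) then (0, 1) else if P = Some (-8, 20) then (1, 0)
      else if P = Some (32, -180) then (1, 1) else if P = Some (12, 0) then (2, 0)
      else if P = Some (-4, 0) then (2, 1) else if P = Some (-8, -20) then (3, 0)
      else if P = Some (32, 180) then (3, 1) else (0, 0))"

definition tors_coords_neg1 :: "(rat \<times> rat) option \<Rightarrow> int \<times> int" where
  "tors_coords_neg1 P =
     (if P = Some (12, 0) then (0, 1) else if P = Some (2, 30) then (1, 0)
      else if P = Some (-28, -120) then (1, 1) else if P = Some (-13, 0) then (2, 0)
      else if P = Some (-4, 0) then (2, 1) else if P = Some (2, -30) then (3, 0)
      else if P = Some (-28, 120) then (3, 1) else (0, 0))"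

definition tors_coords_2 :: "(rat \<times> rat) option \<Rightarrow> int \<times> int" where
  "tors_coords_2 P =
     (if P = Some (-13, 0) then (1, 0) else if P = Some (-4, 0) then (0, 1)
      else if P = Some (12, 0) then (1, 1) else (0, 0))"

lemma ec_tors_1_iso: "ec_tors 1 \<cong> DirProd (integer_mod_group 4) (integer_mod_group 2)"
proof (rule is_iso_DirProd_integer_mod_groupI[where h = tors_coords_1])
  show "carrier (ec_tors 1) = two_torsion_points \<union> order4_points 1" by (rule carrier_ec_tors) simp
  show "tors_coords_1 ` (two_torsion_points \<union> order4_points 1) = {0..<int 4} \<times> {0..<int 2}"
    and "card (two_torsion_points \<union> order4_points 1) = 4 * 2"
    and "\<forall>x \<in> two_torsion_points \<union> order4_points 1. \<forall>y \<in> two_torsion_points \<union> order4_points 1.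
      tors_coords_1 (x \<otimes>\<^bsub>ec_tors 1\<^esub> y)
        = ((fst (tors_coords_1 x) + fst (tors_coords_1 y)) mod int 4,
           (snd (tors_coords_1 x) + snd (tors_coords_1 y)) mod int 2)"
    unfolding ec_tors_simps two_torsion_points_def order4_points_def tors_coords_1_def by code_simp+
qed (auto simp: two_torsion_points_def order4_points_def)

lemma ec_tors_neg1_iso: "ec_tors (-1) \<cong> DirProd (integer_mod_group 4) (integer_mod_group 2)"
proof (rule is_iso_DirProd_integer_mod_groupI[where h = tors_coords_neg1])
  show "carrier (ec_tors (-1)) = two_torsion_points \<union> order4_points (-1)"
    by (rule carrier_ec_tors) simp
  show "tors_coords_neg1 ` (two_torsion_points \<union> order4_points (-1)) = {0..<int 4} \<times> {0..<int 2}"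
    and "card (two_torsion_points \<union> order4_points (-1)) = 4 * 2"
    and "\<forall>x \<in> two_torsion_points \<union> order4_points (-1). \<forall>y \<in> two_torsion_points \<union> order4_points (-1).
      tors_coords_neg1 (x \<otimes>\<^bsub>ec_tors (-1)\<^esub> y)
        = ((fst (tors_coords_neg1 x) + fst (tors_coords_neg1 y)) mod int 4,
           (snd (tors_coords_neg1 x) + snd (tors_coords_neg1 y)) mod int 2)"
    unfolding ec_tors_simps two_torsion_points_def order4_points_def tors_coords_neg1_def by code_simp+
qed (auto simp: two_torsion_points_def order4_points_def)

lemma ec_tors_iso_2:
  assumes "squarefree d" "d \<notin> {1, -1}"
  shows "ec_tors d \<cong> DirProd (integer_mod_group 2) (integer_mod_group 2)"
proof (rule is_iso_DirProd_integer_mod_groupI[where h = tors_coords_2])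
  show "carrier (ec_tors d) = two_torsion_points"
    using carrier_ec_tors[OF assms(1)] assms(2) by (simp add: order4_points_def)
  show "tors_coords_2 ` two_torsion_points = {0..<int 2} \<times> {0..<int 2}"
    and "card two_torsion_points = 2 * 2"
    unfolding two_torsion_points_def tors_coords_2_def by code_simp+
  show "\<forall>x \<in> two_torsion_points. \<forall>y \<in> two_torsion_points.
      tors_coords_2 (x \<otimes>\<^bsub>ec_tors d\<^esub> y)
        = ((fst (tors_coords_2 x) + fst (tors_coords_2 y)) mod int 2,
           (snd (tors_coords_2 x) + snd (tors_coords_2 y)) mod int 2)"
    by (simp add: two_torsion_points_def tors_coords_2_def Let_def)
qed (auto simp: two_torsion_points_def)

lemma has_order_4_iff:
  "has_order d P 4 \<longleftrightarrow> ec_mul d 4 P = None \<and> ec_mul d 1 P \<noteq> None \<and> ec_mul d 2 P \<noteq> None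
     \<and> ec_mul d 3 P \<noteq> None"
proof -
  have "(\<forall>m::nat. 0 < m \<and> m < 4 \<longrightarrow> Q m) \<longleftrightarrow> Q 1 \<and> Q 2 \<and> Q 3" for Q
    by (auto simp: less_Suc_eq numeral_eq_Suc)
  from this[of "\<lambda>m. ec_mul d m P \<noteq> None"] show ?thesis unfolding has_order_def by auto
qed

lemma order4_points_eq:
  assumes sq: "squarefree d"
  shows "{P. on_curve d P \<and> has_order d P 4} = order4_points d"
proof
  show "{P. on_curve d P \<and> has_order d P 4} \<subseteq> order4_points d"
  proof clarify
    fix P assume P: "on_curve d P" "has_order d P 4"
    then have "ec_mul d 4 P = None" by (simp add: has_order_def)
    then have "P \<in> two_torsion_points \<union> order4_points d"
      unfolding carrier_ec_tors[OF sq, symmetric] using P(1) by (auto intro!: exI[of _ 4])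
    moreover have "P \<notin> two_torsion_points"
      using P(2) unfolding has_order_4_iff by (auto simp: two_torsion_points_def numeral_2_eq_2)
    ultimately show "P \<in> order4_points d" by blast
  qed
  have "\<forall>P \<in> order4_points 1. on_curve 1 P \<and> has_order 1 P 4"
    and "\<forall>P \<in> order4_points (-1). on_curve (-1) P \<and> has_order (-1) P 4"
    unfolding has_order_4_iff order4_points_def by code_simp+
  then show "order4_points d \<subseteq> {P. on_curve d P \<and> has_order d P 4}"
    by (cases "d = 1 \<or> d = -1") (auto simp: order4_points_def)
qed

theorem proposition3p4:
  fixes d :: int
  assumes "squarefree d"
  shows "(d \<in> {1, -1} \<longrightarrow>
            ec_tors d \<cong> DirProd (integer_mod_group 4) (integer_mod_group 2))
       \<and> (d \<notin> {1, -1} \<longrightarrow>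
            ec_tors d \<cong> DirProd (integer_mod_group 2) (integer_mod_group 2))
       \<and> (d = 1 \<longrightarrow> {P. on_curve d P \<and> has_order d P 4} =
            {Some (-8, 20), Some (-8, -20), Some (32, 180), Some (32, -180)})
       \<and> (d = -1 \<longrightarrow> {P. on_curve d P \<and> has_order d P 4} =
            {Some (2, 30), Some (2, -30), Some (-28, 120), Some (-28, -120)})"
proof (intro conjI impI)
  show "ec_tors d \<cong> DirProd (integer_mod_group 4) (integer_mod_group 2)" if "d \<in> {1, -1}"
    using that ec_tors_1_iso ec_tors_neg1_iso by auto
  show "ec_tors d \<cong> DirProd (integer_mod_group 2) (integer_mod_group 2)" if "d \<notin> {1, -1}"
    using ec_tors_iso_2[OF assms that] .
qed (use order4_points_eq[OF assms] in \<open>simp_all add: order4_points_def\<close>)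

end
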